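(* Let $d\ge2$, $k\ge1$, $m\ge0$ be integers, $L\ge1$. For $s\in\mathbb R^d$ let $D_s=\bigcup_{j=1}^pD^j_s$ ($p\ge0$; $D_s=\emptyset$ if $p=0$), where $D^j_s=\{z=(s_1,\dots,s_k)\in\mathbb R^{kd}: c^j_0s+\sum_{i=1}^kc^j_is_i=0\}$ with real $c^j_i$ and $(c^j_1,\dots,c^j_k)\ne0$. Let $G_s(z,\theta;\nu)$ be measurable in $(z,\theta,\nu)\in\mathbb R^{kd}\times\mathbb R^m\times(0,1/2]$, $C^2$ in $z$, and satisfy $$|\partial^\alpha_zG_s(z,\theta;\nu)|\le\nu^{-|\alpha|}C^\#(s)C^\#(z)C^\#(\theta)\qquad\text{for }0\le|\alpha|\le2$$ for all values of the arguments. Put $$S_s=\int_{\mathbb R^m}L^{-kd}\sum_{z\in(\mathbb Z^d_L)^k\setminus D_s}G_s(z,\theta;\nu)\,d\theta,\qquad J_s=\int_{\mathbb R^m}\int_{\mathbb R^{kd}}G_s(z,\theta;\nu)\,dz\,d\theta$$ (no $\theta$-integration if $m=0$). Then $|S_s-J_s|\le C^\#(s)\nu^{-2}L^{-2}$ for all $s\in\mathbb R^d$.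
   Context: $\mathbb Z^d_L=L^{-1}\mathbb Z^d$, $\langle x\rangle=(1+|x|^2)^{1/2}$. $C^\#(\cdot)$ denotes (possibly different) nonnegative continuous functions with $C^\#(x)\le C_N\langle x\rangle^{-N}$ for every $N$; the function in the conclusion does not depend on $\nu$ and $L$. *)

theory Defs
  imports "HOL-Analysis.Analysis"
begin

text \<open>Rapidly decaying class C-sharp on a Euclidean space: nonnegative continuous
  functions with f x \<le> C_N \<langle>x\<rangle>^(-N) for every N.\<close>
definition rapid_decay :: "('a::euclidean_space \<Rightarrow> real) \<Rightarrow> bool" where
  "rapid_decay f \<longleftrightarrow> continuous_on UNIV f \<and> (\<forall>x. 0 \<le> f x) \<and>
     (\<forall>N::nat. \<exists>C. \<forall>x. f x \<le> C * (1 + (norm x)\<^sup>2) powr (- real N / 2))"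

text \<open>R^m (m \<ge> 0 allowed) modelled as extensional functions on {..<m}; carrier
  of the product measure Pi_M {..<m} (\<lambda>_. lborel).\<close>
abbreviation Rm :: "nat \<Rightarrow> (nat \<Rightarrow> real) set" where
  "Rm m \<equiv> PiE {..<m} (\<lambda>_. UNIV)"

abbreviation lebesgue_Rm :: "nat \<Rightarrow> (nat \<Rightarrow> real) measure" where
  "lebesgue_Rm m \<equiv> Pi\<^sub>M {..<m} (\<lambda>_. lborel)"

definition rapid_decay_Rm :: "nat \<Rightarrow> ((nat \<Rightarrow> real) \<Rightarrow> real) \<Rightarrow> bool" where
  "rapid_decay_Rm m f \<longleftrightarrow> continuous_on (Rm m) f \<and> (\<forall>x\<in>Rm m. 0 \<le> f x) \<and>
     (\<forall>N::nat. \<exists>C. \<forall>x\<in>Rm m. f x \<le> C * (1 + (\<Sum>i<m. (x i)\<^sup>2)) powr (- real N / 2))"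

definition has_dpart :: "'a::euclidean_space \<Rightarrow> ('a \<Rightarrow> real) \<Rightarrow> 'a \<Rightarrow> bool" where
  "has_dpart b f x \<longleftrightarrow> (\<lambda>t::real. f (x + t *\<^sub>R b)) differentiable (at 0)"

definition dpart :: "'a::euclidean_space \<Rightarrow> ('a \<Rightarrow> real) \<Rightarrow> 'a \<Rightarrow> real" where
  "dpart b f x = deriv (\<lambda>t::real. f (x + t *\<^sub>R b)) 0"

definition C2_fun :: "('a::euclidean_space \<Rightarrow> real) \<Rightarrow> bool" where
  "C2_fun f \<longleftrightarrow> (\<forall>b\<in>Basis. \<forall>x. has_dpart b f x) \<and>
     (\<forall>b\<in>Basis. \<forall>c\<in>Basis. \<forall>x. has_dpart c (dpart b f) x) \<and>
     (\<forall>b\<in>Basis. \<forall>c\<in>Basis. continuous_on UNIV (dpart c (dpart b f)))"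

definition latt :: "real \<Rightarrow> (real^'d) set" where
  "latt L = {x. \<forall>i. L * x $ i \<in> \<int>}"

definition latt_k :: "real \<Rightarrow> ((real^'d)^'k) set" where
  "latt_k L = {z. \<forall>i. z $ i \<in> latt L}"

definition Dset :: "nat \<Rightarrow> (nat \<Rightarrow> real) \<Rightarrow> (nat \<Rightarrow> 'k::finite \<Rightarrow> real) \<Rightarrow> real^'d
     \<Rightarrow> ((real^'d)^'k) set" where
  "Dset p c0 c s = (\<Union>j<p. {z. c0 j *\<^sub>R s + (\<Sum>i\<in>UNIV. c j i *\<^sub>R z $ i) = 0})"

end

(*
  Every rapidly decaying weight is dominated by the product Cauchy weight
  prod_b 1/(1 + x_b^2), whose sum over the grid L^-1 Z^n is O(L^n) and whose sum over a
  coordinate subspace of codimension d is O(L^(n-d)).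

  Cut R^n into the cubes of side 1/L centred at the grid points. On each cube the midpoint
  rule has error O(nu^-2 L^(-n-2)) times the weight, because averaging G with its reflection
  through the centre cancels the first-order Taylor term; summing over the cubes gives
  |L^-n sum_grid G - integral G| = O(nu^-2 L^-2). On each hyperplane D^j_s one block z_i is
  determined by the others, so the removed grid points carry total weight O(L^(n-d)), which
  after the normalisation L^-n is O(L^-2) because d >= 2. All bounds are uniform in theta up
  to the integrable factor C3(theta), so they survive the integration over theta.
*)
theory Submission
  imports Defs "HOL-Probability.Sinc_Integral"
begin

section \<open>Cauchy weights\<close>

definition cauchy_kernel :: "real \<Rightarrow> real" where
  "cauchy_kernel t = 1 / (1 + t\<^sup>2)"

definition cauchy_weight :: "'a::euclidean_space \<Rightarrow> real" where
  "cauchy_weight x = (\<Prod>b\<in>Basis. cauchy_kernel (x \<bullet> b))"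

lemma cauchy_kernel_pos: "0 < cauchy_kernel t"
  unfolding cauchy_kernel_def by (simp add: add_pos_nonneg)

lemma cauchy_kernel_le_1: "cauchy_kernel t \<le> 1"
  unfolding cauchy_kernel_def by (simp add: divide_le_eq_1 add_pos_nonneg)

lemma cauchy_kernel_minus [simp]: "cauchy_kernel (- t) = cauchy_kernel t"
  unfolding cauchy_kernel_def by simp

lemma cauchy_weight_pos: "0 < cauchy_weight x"
  unfolding cauchy_weight_def by (simp add: prod_pos cauchy_kernel_pos)

lemma cauchy_weight_le_1: "cauchy_weight x \<le> 1"
  unfolding cauchy_weight_def
  by (rule prod_le_1) (auto simp: cauchy_kernel_le_1 cauchy_kernel_pos less_imp_le)

lemma continuous_on_cauchy_kernel: "continuous_on UNIV cauchy_kernel"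
  unfolding cauchy_kernel_def[abs_def]
  by (intro continuous_intros) (simp add: add_nonneg_eq_0_iff)

lemma continuous_on_cauchy_weight: "continuous_on UNIV (cauchy_weight :: 'a::euclidean_space \<Rightarrow> real)"
  unfolding cauchy_weight_def[abs_def]
  by (intro continuous_intros continuous_on_compose2[OF continuous_on_cauchy_kernel]) auto

lemma integrable_cauchy_kernel: "integrable lborel cauchy_kernel"
proof -
  have "set_integrable lborel UNIV (\<lambda>x::real. inverse (1 + x\<^sup>2))"
    using integrable_inverse_1_plus_square by (simp add: einterval_iff)
  then show ?thesis
    by (simp add: set_integrable_def cauchy_kernel_def[abs_def] divide_inverse)
qed

lemma integrable_cauchy_weight: "integrable lborel (cauchy_weight :: 'a::euclidean_space \<Rightarrow> real)"
proof (rule integrableI_nonneg)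
  show "(cauchy_weight :: 'a \<Rightarrow> real) \<in> borel_measurable lborel"
    using borel_measurable_continuous_onI[OF continuous_on_cauchy_weight] by simp
  show "AE x in lborel. 0 \<le> (cauchy_weight :: 'a \<Rightarrow> real) x"
    by (simp add: cauchy_weight_pos less_imp_le)
  have meas: "cauchy_kernel \<in> borel_measurable borel"
    by (rule borel_measurable_continuous_onI[OF continuous_on_cauchy_kernel])
  have "(\<integral>\<^sup>+x. ennreal (cauchy_weight (x::'a)) \<partial>lborel)
      = (\<integral>\<^sup>+x. (\<Prod>b\<in>(Basis::'a set). ennreal (cauchy_kernel (x \<bullet> b))) \<partial>lborel)"
    unfolding cauchy_weight_def
    by (subst prod_ennreal[symmetric]) (auto simp: cauchy_kernel_pos less_imp_le)
  also have "\<dots> = (\<Prod>b\<in>(Basis::'a set). (\<integral>\<^sup>+x. ennreal (cauchy_kernel x) \<partial>lborel))"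
    by (rule nn_integral_lborel_prod) (use meas in auto)
  also have "\<dots> < \<infinity>"
    using integrableD(2)[OF integrable_cauchy_kernel]
    by (simp add: power_less_top_ennreal top.not_eq_extremum)
  finally show "(\<integral>\<^sup>+x. ennreal (cauchy_weight x) \<partial>(lborel :: 'a measure)) < \<infinity>" .
qed

lemma powr_le_cauchy_weight:
  fixes x :: "'a::euclidean_space"
  shows "(1 + (norm x)\<^sup>2) powr (- real DIM('a)) \<le> cauchy_weight x"
proof -
  have "(x \<bullet> b)\<^sup>2 \<le> (norm x)\<^sup>2" if "b \<in> Basis" for b
    using power_mono[OF Basis_le_norm[OF that] abs_ge_zero, where n=2] by simp
  then have "(\<Prod>b\<in>Basis. 1 + (x \<bullet> b)\<^sup>2) \<le> (\<Prod>b\<in>(Basis::'a set). 1 + (norm x)\<^sup>2)"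
    by (intro prod_mono) auto
  also have "\<dots> = (1 + (norm x)\<^sup>2) ^ DIM('a)" by simp
  finally have le: "(\<Prod>b\<in>Basis. 1 + (x \<bullet> b)\<^sup>2) \<le> (1 + (norm x)\<^sup>2) ^ DIM('a)" .
  have pos: "0 < (\<Prod>b\<in>(Basis::'a set). 1 + (x \<bullet> b)\<^sup>2)"
    by (rule prod_pos) (auto simp: add_pos_nonneg)
  have "(1 + (norm x)\<^sup>2) powr (- real DIM('a)) = 1 / (1 + (norm x)\<^sup>2) ^ DIM('a)"
    by (simp add: powr_minus powr_realpow divide_inverse add_pos_nonneg)
  also have "\<dots> \<le> 1 / (\<Prod>b\<in>Basis. 1 + (x \<bullet> b)\<^sup>2)"
    using le pos by (intro divide_left_mono) auto
  also have "\<dots> = cauchy_weight x"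
    unfolding cauchy_weight_def cauchy_kernel_def by (simp add: prod_dividef)
  finally show ?thesis .
qed

lemma rapid_decay_le_cauchy_weight:
  fixes w :: "'a::euclidean_space \<Rightarrow> real"
  assumes "rapid_decay w"
  obtains K where "0 \<le> K" "\<And>x. w x \<le> K * cauchy_weight x"
proof -
  obtain K where K: "\<And>x. w x \<le> K * (1 + (norm x)\<^sup>2) powr (- real (2 * DIM('a)) / 2)"
    using assms unfolding rapid_decay_def by blast
  have "0 \<le> w 0" using assms unfolding rapid_decay_def by blast
  with K[of 0] have "0 \<le> K" by (simp add: zero_le_mult_iff)
  moreover have "w x \<le> K * cauchy_weight x" for x
    using K[of x] mult_left_mono[OF powr_le_cauchy_weight[of x] \<open>0 \<le> K\<close>] by simp
  ultimately show ?thesis by (rule that)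
qed

lemma cauchy_kernel_shift:
  assumes "\<bar>a - b\<bar> \<le> 1/2"
  shows "cauchy_kernel a \<le> 5/2 * cauchy_kernel b"
proof -
  have "(a - b)\<^sup>2 \<le> 1/4"
    using assms power_mono[OF assms abs_ge_zero, of 2] by (simp add: power2_eq_square)
  moreover have "b\<^sup>2 \<le> 2 * a\<^sup>2 + 2 * (a - b)\<^sup>2"
    using sum_squares_ge_zero[of "a + (a - b)" 0] by (simp add: power2_eq_square algebra_simps)
  ultimately have "1 + b\<^sup>2 \<le> 5/2 * (1 + a\<^sup>2)"
    using zero_le_power2[of a] unfolding distrib_left by linarith
  then show ?thesis
    unfolding cauchy_kernel_def by (simp add: field_simps add_pos_nonneg)
qed

lemma cauchy_weight_shift:
  fixes x z :: "'a::euclidean_space"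
  assumes "\<forall>b\<in>Basis. \<bar>(x - z) \<bullet> b\<bar> \<le> 1/2"
  shows "cauchy_weight x \<le> (5/2) ^ DIM('a) * cauchy_weight z"
proof -
  have "cauchy_weight x \<le> (\<Prod>b\<in>(Basis::'a set). 5/2 * cauchy_kernel (z \<bullet> b))"
    unfolding cauchy_weight_def using assms
    by (intro prod_mono conjI cauchy_kernel_shift)
       (auto simp: inner_diff_left cauchy_kernel_pos less_imp_le)
  also have "\<dots> = (5/2) ^ DIM('a) * cauchy_weight z"
    by (subst prod.distrib) (simp add: cauchy_weight_def)
  finally show ?thesis .
qed

definition cauchy_weight_Rm :: "nat \<Rightarrow> (nat \<Rightarrow> real) \<Rightarrow> real" where
  "cauchy_weight_Rm m \<theta> = (\<Prod>i<m. cauchy_kernel (\<theta> i))"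

lemma cauchy_weight_Rm_pos: "0 < cauchy_weight_Rm m \<theta>"
  unfolding cauchy_weight_Rm_def by (simp add: prod_pos cauchy_kernel_pos)

lemma integrable_cauchy_weight_Rm: "integrable (lebesgue_Rm m) (cauchy_weight_Rm m)"
proof -
  interpret product_sigma_finite "\<lambda>_::nat. (lborel :: real measure)"
    unfolding product_sigma_finite_def using lborel.sigma_finite_measure_axioms by simp
  show ?thesis
    unfolding cauchy_weight_Rm_def[abs_def]
    by (rule product_integrable_prod) (auto intro: integrable_cauchy_kernel)
qed

lemma rapid_decay_Rm_le_cauchy_weight_Rm:
  assumes "rapid_decay_Rm m w"
  obtains K where "0 \<le> K" "\<And>\<theta>. \<theta> \<in> Rm m \<Longrightarrow> w \<theta> \<le> K * cauchy_weight_Rm m \<theta>"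
proof -
  obtain K where K: "\<forall>\<theta>\<in>Rm m. w \<theta> \<le> K * (1 + (\<Sum>i<m. (\<theta> i)\<^sup>2)) powr (- real (2*m) / 2)"
    using assms unfolding rapid_decay_Rm_def by blast
  have powr_le: "(1 + (\<Sum>i<m. (\<theta> i)\<^sup>2)) powr (- real m) \<le> cauchy_weight_Rm m \<theta>" for \<theta>
  proof -
    define S where "S = (\<Sum>i<m. (\<theta> i)\<^sup>2)"
    have "(\<theta> i)\<^sup>2 \<le> S" if "i < m" for i
      unfolding S_def using that by (intro member_le_sum) auto
    then have "(\<Prod>i<m. 1 + (\<theta> i)\<^sup>2) \<le> (\<Prod>i<m. 1 + S)"
      by (intro prod_mono) auto
    then have le: "(\<Prod>i<m. 1 + (\<theta> i)\<^sup>2) \<le> (1 + S) ^ m" by simp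
    have "(1 + S) powr (- real m) = 1 / (1 + S) ^ m"
      unfolding S_def by (simp add: powr_minus powr_realpow divide_inverse add_pos_nonneg sum_nonneg)
    also have "\<dots> \<le> 1 / (\<Prod>i<m. 1 + (\<theta> i)\<^sup>2)"
      using le by (intro divide_left_mono mult_pos_pos prod_pos) (auto simp: add_pos_nonneg S_def sum_nonneg)
    also have "\<dots> = cauchy_weight_Rm m \<theta>"
      unfolding cauchy_weight_Rm_def cauchy_kernel_def by (simp add: prod_dividef)
    finally show ?thesis unfolding S_def .
  qed
  show ?thesis
  proof
    show "0 \<le> max K 0" by simp
    fix \<theta> assume "\<theta> \<in> Rm m"
    then have "w \<theta> \<le> K * (1 + (\<Sum>i<m. (\<theta> i)\<^sup>2)) powr (- real m)" using K by simp
    also have "\<dots> \<le> max K 0 * cauchy_weight_Rm m \<theta>"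
      by (intro mult_mono powr_le) auto
    finally show "w \<theta> \<le> max K 0 * cauchy_weight_Rm m \<theta>" .
  qed
qed

lemma rapid_decay_cmult:
  assumes "rapid_decay f" "0 \<le> K"
  shows "rapid_decay (\<lambda>x. K * f x)"
  unfolding rapid_decay_def
proof (intro conjI allI)
  show "continuous_on UNIV (\<lambda>x. K * f x)"
    using assms(1) unfolding rapid_decay_def by (intro continuous_intros) auto
  show "0 \<le> K * f x" for x
    using assms unfolding rapid_decay_def by simp
  fix N :: nat
  obtain C where "\<forall>x. f x \<le> C * (1 + (norm x)\<^sup>2) powr (- real N / 2)"
    using assms(1) unfolding rapid_decay_def by blast
  then show "\<exists>C. \<forall>x. K * f x \<le> C * (1 + (norm x)\<^sup>2) powr (- real N / 2)"
    using assms(2) by (intro exI[of _ "K * C"]) (auto simp: mult.assoc intro: mult_left_mono)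
qed

section \<open>Weighted sums over the grid\<close>

definition grid :: "real \<Rightarrow> 'a::euclidean_space set" where
  "grid L = {x. \<forall>b\<in>Basis. L * (x \<bullet> b) \<in> \<int>}"

text \<open>Telescoping: the \<open>j\<close>-th term is at most \<open>2L\<^sup>2/(L+j-1) - 2L\<^sup>2/(L+j)\<close>.\<close>
lemma sum_cauchy_kernel_nat_le:
  assumes L: "L \<ge> (1::real)"
  shows "(\<Sum>j=1..M. cauchy_kernel (real j / L)) \<le> 2*L - 2*L\<^sup>2/(L + real M)"
proof (induction M)
  case 0
  then show ?case using L by (simp add: power2_eq_square)
next
  case (Suc M)
  define b where "b = real M + 1"
  have Lpos: "L > 0" using L by simp
  have "(L + real M) * (L + real M + 1) \<le> (L + b)\<^sup>2"
    unfolding b_def power2_eq_square using Lpos by (intro mult_mono) auto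
  also have "\<dots> \<le> 2 * (L\<^sup>2 + b\<^sup>2)"
    using zero_le_power2[of "L - b"] by (simp add: power2_eq_square algebra_simps)
  finally have le: "(L + real M) * (L + real M + 1) \<le> 2 * (L\<^sup>2 + b\<^sup>2)" .
  have pos: "0 < (L + real M) * (L + real M + 1)" using Lpos by simp
  have "cauchy_kernel (real (Suc M) / L) = L\<^sup>2 / (L\<^sup>2 + b\<^sup>2)"
    unfolding cauchy_kernel_def b_def using Lpos by (simp add: field_simps power2_eq_square)
  also have "\<dots> = 2*L\<^sup>2 / (2 * (L\<^sup>2 + b\<^sup>2))"
    by (simp only: mult_divide_mult_cancel_left_if) simp
  also have "\<dots> \<le> 2*L\<^sup>2 / ((L + real M) * (L + real M + 1))"
    using le pos by (intro divide_left_mono) auto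
  also have "\<dots> = 2*L\<^sup>2/(L + real M) - 2*L\<^sup>2/(L + real (Suc M))"
    using Lpos by (simp add: field_simps power2_eq_square)
  finally show ?case using Suc.IH by simp
qed

lemma sum_cauchy_kernel_grid_nonneg_le:
  assumes L: "L \<ge> (1::real)" and fin: "finite S" and S: "S \<subseteq> {t. L * t \<in> \<int> \<and> 0 \<le> t}"
  shows "(\<Sum>t\<in>S. cauchy_kernel t) \<le> 1 + 2*L"
proof -
  define g where "g t = nat \<lfloor>L * t\<rfloor>" for t
  have Lpos: "L > 0" using L by simp
  have tg: "t = real (g t) / L" if "t \<in> S" for t
  proof -
    from that S obtain k where k: "L * t = of_int k" and "0 \<le> t" by (auto elim: Ints_cases)
    with Lpos have "0 \<le> k" by (metis of_int_0_le_iff zero_le_mult_iff less_le_not_le)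
    with k Lpos show ?thesis unfolding g_def by (simp add: field_simps)
  qed
  have inj: "inj_on g S" by (rule inj_onI) (metis tg)
  have "(\<Sum>t\<in>S. cauchy_kernel t) = (\<Sum>t\<in>S. cauchy_kernel (real (g t) / L))"
    by (rule sum.cong) (auto dest: tg)
  also have "\<dots> = (\<Sum>j\<in>g ` S. cauchy_kernel (real j / L))"
    by (simp add: sum.reindex[OF inj])
  also have "\<dots> \<le> (\<Sum>j\<in>{0..Max (g ` S)}. cauchy_kernel (real j / L))"
    using fin by (intro sum_mono2) (auto simp: cauchy_kernel_pos less_imp_le)
  also have "\<dots> = cauchy_kernel 0 + (\<Sum>j=1..Max (g ` S). cauchy_kernel (real j / L))"
    by (simp add: sum.atLeast_Suc_atMost)
  also have "\<dots> \<le> 1 + 2*L"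
  proof -
    have "0 \<le> 2 * L\<^sup>2 / (L + real (Max (g ` S)))" using Lpos by simp
    then show ?thesis
      using cauchy_kernel_le_1[of 0] sum_cauchy_kernel_nat_le[OF L, of "Max (g ` S)"] by linarith
  qed
  finally show ?thesis .
qed

lemma sum_cauchy_kernel_grid_le:
  assumes L: "L \<ge> (1::real)" and fin: "finite T" and T: "T \<subseteq> {t. L * t \<in> \<int>}"
  shows "(\<Sum>t\<in>T. cauchy_kernel t) \<le> 6*L"
proof -
  have "(\<Sum>t\<in>T. cauchy_kernel t) = (\<Sum>t\<in>T \<inter> {0..}. cauchy_kernel t) + (\<Sum>t\<in>T - {0..}. cauchy_kernel t)"
    using fin by (metis sum.Int_Diff)
  also have "(\<Sum>t\<in>T \<inter> {0..}. cauchy_kernel t) \<le> 1 + 2*L"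
    using T fin by (intro sum_cauchy_kernel_grid_nonneg_le[OF L]) auto
  also have "(\<Sum>t\<in>T - {0..}. cauchy_kernel t) = (\<Sum>t\<in>uminus ` (T - {0..}). cauchy_kernel t)"
    by (subst sum.reindex) (auto simp: inj_on_def)
  also have "\<dots> \<le> 1 + 2*L"
  proof (rule sum_cauchy_kernel_grid_nonneg_le[OF L])
    show "finite (uminus ` (T - {0..}))" using fin by simp
    show "uminus ` (T - {0..}) \<subseteq> {t. L * t \<in> \<int> \<and> 0 \<le> t}"
      using T by (auto simp: Ints_minus)
  qed
  finally show ?thesis using L by simp
qed

lemma sum_cauchy_weight_grid_le:
  fixes V :: "'a::euclidean_space set"
  assumes V: "V \<subseteq> Basis" and L: "L \<ge> 1" and fin: "finite F"
    and F: "F \<subseteq> {x\<in>grid L. \<forall>b\<in>V. x \<bullet> b = 0}"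
  shows "(\<Sum>x\<in>F. cauchy_weight x) \<le> (6*L) ^ card (Basis - V)"
proof -
  define coords where "coords x = restrict (\<lambda>b. x \<bullet> b) Basis" for x :: 'a
  define T where "T b = (\<lambda>x. x \<bullet> b) ` F" for b :: 'a
  have inj: "inj_on coords F"
    by (rule inj_onI) (metis coords_def restrict_apply' euclidean_eqI)
  have finT: "finite (T b)" for b unfolding T_def using fin by simp
  have "(\<Sum>x\<in>F. cauchy_weight x) = (\<Sum>f\<in>coords ` F. \<Prod>b\<in>Basis. cauchy_kernel (f b))"
    unfolding cauchy_weight_def coords_def
    by (subst sum.reindex[OF inj[unfolded coords_def]]) auto
  also have "\<dots> \<le> (\<Sum>f\<in>PiE Basis T. \<Prod>b\<in>Basis. cauchy_kernel (f b))"
    by (intro sum_mono2 finite_PiE finT)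
       (auto simp: coords_def T_def prod_nonneg cauchy_kernel_pos less_imp_le)
  also have "\<dots> = (\<Prod>b\<in>Basis. \<Sum>t\<in>T b. cauchy_kernel t)"
    by (rule prod_sum_PiE[symmetric]) (auto simp: finT)
  also have "\<dots> \<le> (\<Prod>b\<in>Basis. if b \<in> V then 1 else 6*L)"
  proof (intro prod_mono conjI)
    fix b :: 'a assume b: "b \<in> Basis"
    show "0 \<le> (\<Sum>t\<in>T b. cauchy_kernel t)" by (simp add: sum_nonneg cauchy_kernel_pos less_imp_le)
    show "(\<Sum>t\<in>T b. cauchy_kernel t) \<le> (if b \<in> V then 1 else 6*L)"
    proof (cases "b \<in> V")
      case True
      then have "T b \<subseteq> {0}" using F unfolding T_def by auto
      then have "(\<Sum>t\<in>T b. cauchy_kernel t) \<le> (\<Sum>t\<in>{0}. cauchy_kernel t)"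
        by (intro sum_mono2) (auto simp: cauchy_kernel_pos less_imp_le)
      then show ?thesis using True cauchy_kernel_le_1[of 0] by simp
    next
      case False
      have "T b \<subseteq> {t. L * t \<in> \<int>}" using F b unfolding T_def grid_def by auto
      then show ?thesis using False sum_cauchy_kernel_grid_le[OF L finT] by simp
    qed
  qed
  also have "\<dots> = (6*L) ^ card (Basis - V)"
    by (simp add: prod.If_cases Diff_eq)
  finally show ?thesis .
qed

lemma grid_dominated_summable:
  fixes f :: "'a::euclidean_space \<Rightarrow> real"
  assumes L: "L \<ge> 1" and c: "0 \<le> c" and f: "\<And>x. x \<in> grid L \<Longrightarrow> \<bar>f x\<bar> \<le> c * cauchy_weight x"
  shows "f summable_on grid L" and "(\<lambda>x. \<bar>f x\<bar>) summable_on grid L"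
    and "\<bar>infsum f (grid L)\<bar> \<le> c * (6*L) ^ DIM('a)"
proof -
  have finite_sums: "(\<Sum>x\<in>F. cauchy_weight x) \<le> (6*L) ^ DIM('a)" if "finite F" "F \<subseteq> grid L" for F :: "'a set"
    using sum_cauchy_weight_grid_le[of "{}" L F] L that by simp
  have "cauchy_weight summable_on (grid L :: 'a set)"
    by (rule nonneg_bdd_above_summable_on)
       (auto simp: cauchy_weight_pos less_imp_le bdd_above_def intro!: finite_sums)
  then have cw: "(\<lambda>x. c * cauchy_weight x) summable_on (grid L :: 'a set)"
    by (rule summable_on_cmult_right)
  have "infsum cauchy_weight (grid L :: 'a set) \<le> (6*L) ^ DIM('a)"
    by (rule infsum_le_finite_sums) (use \<open>cauchy_weight summable_on grid L\<close> finite_sums in auto)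
  then have cw_le: "infsum (\<lambda>x. c * cauchy_weight x) (grid L :: 'a set) \<le> c * (6*L) ^ DIM('a)"
    using c by (simp add: infsum_cmult_right' mult_left_mono)
  have norm: "(\<lambda>x. norm (f x)) summable_on grid L"
    by (rule Infinite_Sum.abs_summable_on_comparison_test'[OF cw]) (simp add: f)
  then show abs: "(\<lambda>x. \<bar>f x\<bar>) summable_on grid L"
    by simp
  from norm show "f summable_on grid L"
    by (rule abs_summable_summable)
  have "\<bar>infsum f (grid L)\<bar> \<le> infsum (\<lambda>x. \<bar>f x\<bar>) (grid L)"
    using norm_infsum_bound[of f "grid L"] abs by simp
  also have "\<dots> \<le> infsum (\<lambda>x. c * cauchy_weight x) (grid L :: 'a set)"
    by (rule infsum_mono[OF abs cw f])
  finally show "\<bar>infsum f (grid L)\<bar> \<le> c * (6*L) ^ DIM('a)" using cw_le by simp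
qed

lemma countable_grid: "L \<noteq> 0 \<Longrightarrow> countable (grid L :: 'a::euclidean_space set)"
proof -
  assume L: "L \<noteq> 0"
  define from_coords where "from_coords f = (\<Sum>b\<in>Basis. (f b / L) *\<^sub>R b)" for f :: "'a \<Rightarrow> real"
  have "grid L \<subseteq> from_coords ` (PiE Basis (\<lambda>_. \<int>))"
  proof
    fix x :: 'a assume x: "x \<in> grid L"
    have "x = from_coords (restrict (\<lambda>b. L * (x \<bullet> b)) Basis)"
      unfolding from_coords_def using L by (simp add: euclidean_representation)
    moreover have "restrict (\<lambda>b. L * (x \<bullet> b)) Basis \<in> PiE Basis (\<lambda>_. \<int>)"
      using x by (auto simp: grid_def)
    ultimately show "x \<in> from_coords ` (PiE Basis (\<lambda>_. \<int>))" by blast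
  qed
  moreover have "countable (from_coords ` (PiE Basis (\<lambda>_. \<int>)))"
    by (intro countable_image countable_PiE) (auto simp: countable_int)
  ultimately show ?thesis by (rule countable_subset)
qed

lemma infinite_grid: "infinite (grid L :: 'a::euclidean_space set)"
proof -
  obtain b :: 'a where b: "b \<in> Basis" using nonempty_Basis by blast
  define f where "f n = (if L = 0 then real n else real n / L) *\<^sub>R b" for n :: nat
  have "inj f" unfolding f_def by (rule injI) (use b in \<open>auto split: if_splits simp: nonzero_Basis\<close>)
  moreover have "range f \<subseteq> grid L" unfolding f_def grid_def using b by (auto simp: inner_Basis)
  ultimately show ?thesis by (meson finite_subset infinite_iff_countable_subset)
qed

section \<open>Estimates through partial derivatives\<close>

lemma has_real_derivative_dpart:
  assumes "has_dpart b f (x + t *\<^sub>R b)"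
  shows "((\<lambda>s. f (x + s *\<^sub>R b)) has_real_derivative dpart b f (x + t *\<^sub>R b)) (at t)"
proof -
  have "((\<lambda>u. f ((x + t *\<^sub>R b) + u *\<^sub>R b)) has_real_derivative dpart b f (x + t *\<^sub>R b)) (at 0)"
    using assms unfolding has_dpart_def dpart_def by (simp add: DERIV_deriv_iff_real_differentiable)
  then have "((\<lambda>u. f (x + (u + t) *\<^sub>R b)) has_real_derivative dpart b f (x + t *\<^sub>R b)) (at 0)"
    by (simp add: algebra_simps scaleR_add_left)
  then show ?thesis using DERIV_shift[of "\<lambda>s. f (x + s *\<^sub>R b)" _ 0 t] by simp
qed

lemma abs_diff_le_of_deriv_bound:
  fixes \<phi> \<phi>' :: "real \<Rightarrow> real"
  assumes "\<And>s. \<bar>s\<bar> \<le> \<bar>T\<bar> \<Longrightarrow> (\<phi> has_real_derivative \<phi>' s) (at s)"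
    and "\<And>s. \<bar>s\<bar> \<le> \<bar>T\<bar> \<Longrightarrow> \<bar>\<phi>' s\<bar> \<le> M"
  shows "\<bar>\<phi> T - \<phi> 0\<bar> \<le> M * \<bar>T\<bar>"
  using field_differentiable_bound[of "cball 0 \<bar>T\<bar>" \<phi> \<phi>' M T 0] assms
  by (auto simp: has_field_derivative_at_within)

definition basis_proj :: "'a::euclidean_space \<Rightarrow> 'a set \<Rightarrow> 'a" where
  "basis_proj v S = (\<Sum>c\<in>S. (v \<bullet> c) *\<^sub>R c)"

lemma inner_basis_proj:
  fixes v :: "'a::euclidean_space"
  assumes "S \<subseteq> Basis" "c \<in> Basis"
  shows "basis_proj v S \<bullet> c = (if c \<in> S then v \<bullet> c else 0)"
proof -
  have "basis_proj v S \<bullet> c = (\<Sum>e\<in>S. if e = c then v \<bullet> c else 0)"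
    unfolding basis_proj_def inner_sum_left using assms by (intro sum.cong) (auto simp: inner_Basis)
  also have "\<dots> = (if c \<in> S then v \<bullet> c else 0)"
    using finite_subset[OF assms(1)] by (simp add: sum.delta)
  finally show ?thesis .
qed

lemma basis_proj_Basis [simp]: "basis_proj v Basis = v"
  unfolding basis_proj_def by (rule euclidean_representation)

lemma basis_proj_empty [simp]: "basis_proj v {} = 0"
  unfolding basis_proj_def by simp

lemma basis_proj_insert:
  "finite S \<Longrightarrow> b \<notin> S \<Longrightarrow> basis_proj v (insert b S) = basis_proj v S + (v \<bullet> b) *\<^sub>R b"
  unfolding basis_proj_def by simp

lemma inner_basis_proj_plus_le:
  fixes v :: "'a::euclidean_space"
  assumes S: "S \<subseteq> Basis" and b: "b \<in> Basis" "b \<notin> S"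
    and v: "\<forall>c\<in>Basis. \<bar>v \<bullet> c\<bar> \<le> r" and s: "\<bar>s\<bar> \<le> \<bar>v \<bullet> b\<bar>"
  shows "\<forall>c\<in>Basis. \<bar>(basis_proj v S + s *\<^sub>R b) \<bullet> c\<bar> \<le> r"
proof
  fix c :: 'a assume c: "c \<in> Basis"
  have "\<bar>v \<bullet> c\<bar> \<le> r" "\<bar>v \<bullet> b\<bar> \<le> r" using v b c by auto
  then show "\<bar>(basis_proj v S + s *\<^sub>R b) \<bullet> c\<bar> \<le> r"
    using S b c s by (auto simp: inner_add_left inner_basis_proj inner_Basis)
qed

lemma sum_abs_inner_basis_proj_plus:
  fixes v :: "'a::euclidean_space"
  assumes S: "S \<subseteq> Basis" and b: "b \<in> Basis"
  shows "(\<Sum>c\<in>Basis. \<bar>(basis_proj v S + s *\<^sub>R b) \<bullet> c\<bar>) \<le> (\<Sum>c\<in>S. \<bar>v \<bullet> c\<bar>) + \<bar>s\<bar>"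
proof -
  have "(\<Sum>c\<in>Basis. \<bar>(basis_proj v S + s *\<^sub>R b) \<bullet> c\<bar>)
      \<le> (\<Sum>c\<in>Basis. (if c \<in> S then \<bar>v \<bullet> c\<bar> else 0) + (if c = b then \<bar>s\<bar> else 0))"
    using S b by (intro sum_mono) (auto simp: inner_add_left inner_basis_proj inner_Basis)
  also have "\<dots> = (\<Sum>c\<in>S. \<bar>v \<bullet> c\<bar>) + \<bar>s\<bar>"
    using S b by (simp add: sum.distrib sum.If_cases Int_absorb1)
  finally show ?thesis .
qed

text \<open>Only partial derivatives are available, so both estimates below move from \<open>z\<close> to
  \<open>z + v\<close> one coordinate at a time, staying inside the box of radius \<open>r\<close> around \<open>z\<close>.\<close>
lemma abs_diff_le_of_dpart_bound:
  fixes f :: "'a::euclidean_space \<Rightarrow> real"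
  assumes hd: "\<forall>b\<in>Basis. \<forall>x. has_dpart b f x"
    and bd: "\<forall>b\<in>Basis. \<forall>x. (\<forall>c\<in>Basis. \<bar>(x - z) \<bullet> c\<bar> \<le> r) \<longrightarrow> \<bar>dpart b f x\<bar> \<le> M"
    and v: "\<forall>c\<in>Basis. \<bar>v \<bullet> c\<bar> \<le> r"
  shows "\<bar>f (z + v) - f z\<bar> \<le> M * (\<Sum>c\<in>Basis. \<bar>v \<bullet> c\<bar>)"
proof -
  have "\<bar>f (z + basis_proj v S) - f z\<bar> \<le> M * (\<Sum>c\<in>S. \<bar>v \<bullet> c\<bar>)" if "S \<subseteq> Basis" for S
    using finite_subset[OF that finite_Basis] that
  proof (induction S rule: finite_induct)
    case empty
    then show ?case by simp
  next
    case (insert b S)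
    define y where "y = z + basis_proj v S"
    have S: "S \<subseteq> Basis" and b: "b \<in> Basis" using insert by auto
    have "\<bar>f (y + (v \<bullet> b) *\<^sub>R b) - f (y + 0 *\<^sub>R b)\<bar> \<le> M * \<bar>v \<bullet> b\<bar>"
    proof (rule abs_diff_le_of_deriv_bound)
      fix s assume s: "\<bar>s\<bar> \<le> \<bar>v \<bullet> b\<bar>"
      show "((\<lambda>s. f (y + s *\<^sub>R b)) has_real_derivative dpart b f (y + s *\<^sub>R b)) (at s)"
        using hd b by (intro has_real_derivative_dpart) auto
      have "\<forall>c\<in>Basis. \<bar>(y + s *\<^sub>R b - z) \<bullet> c\<bar> \<le> r"
        using inner_basis_proj_plus_le[OF S b insert(2) v s] unfolding y_def by (simp add: algebra_simps)
      then show "\<bar>dpart b f (y + s *\<^sub>R b)\<bar> \<le> M" using bd b by blast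
    qed
    then have "\<bar>f (z + basis_proj v (insert b S)) - f y\<bar> \<le> M * \<bar>v \<bullet> b\<bar>"
      using insert(1,2) by (simp add: basis_proj_insert y_def add.assoc)
    moreover have "\<bar>f y - f z\<bar> \<le> M * (\<Sum>c\<in>S. \<bar>v \<bullet> c\<bar>)" using insert S unfolding y_def by blast
    ultimately show ?case using insert(1,2) by (simp add: distrib_left)
  qed
  from this[of Basis] show ?thesis by simp
qed

lemma abs_taylor1_remainder_le_of_dpart2_bound:
  fixes f :: "'a::euclidean_space \<Rightarrow> real"
  assumes hd1: "\<forall>b\<in>Basis. \<forall>x. has_dpart b f x"
    and hd2: "\<forall>b\<in>Basis. \<forall>c\<in>Basis. \<forall>x. has_dpart c (dpart b f) x"
    and bd: "\<forall>b\<in>Basis. \<forall>c\<in>Basis. \<forall>x. (\<forall>e\<in>Basis. \<bar>(x - z) \<bullet> e\<bar> \<le> r) \<longrightarrow> \<bar>dpart c (dpart b f) x\<bar> \<le> M"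
    and v: "\<forall>c\<in>Basis. \<bar>v \<bullet> c\<bar> \<le> r" and M: "0 \<le> M"
  shows "\<bar>f (z + v) - f z - (\<Sum>b\<in>Basis. (v \<bullet> b) * dpart b f z)\<bar> \<le> M * (\<Sum>c\<in>Basis. \<bar>v \<bullet> c\<bar>)\<^sup>2"
proof -
  have "\<bar>f (z + basis_proj v S) - f z - (\<Sum>b\<in>S. (v \<bullet> b) * dpart b f z)\<bar> \<le> M * (\<Sum>c\<in>S. \<bar>v \<bullet> c\<bar>)\<^sup>2"
    if "S \<subseteq> Basis" for S
    using finite_subset[OF that finite_Basis] that
  proof (induction S rule: finite_induct)
    case empty
    then show ?case by simp
  next
    case (insert b S)
    have S: "S \<subseteq> Basis" and b: "b \<in> Basis" using insert by auto
    define y where "y = z + basis_proj v S"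
    define A where "A = (\<Sum>c\<in>S. \<bar>v \<bullet> c\<bar>)"
    define D where "D = dpart b f z"
    have A0: "0 \<le> A" unfolding A_def by (simp add: sum_nonneg)
    have "\<bar>(f (y + (v \<bullet> b) *\<^sub>R b) - (v \<bullet> b) * D) - (f (y + 0 *\<^sub>R b) - 0 * D)\<bar>
        \<le> (M * (A + \<bar>v \<bullet> b\<bar>)) * \<bar>v \<bullet> b\<bar>"
    proof (rule abs_diff_le_of_deriv_bound[where \<phi>'="\<lambda>s. dpart b f (y + s *\<^sub>R b) - D"])
      fix s assume s: "\<bar>s\<bar> \<le> \<bar>v \<bullet> b\<bar>"
      have "((\<lambda>s. f (y + s *\<^sub>R b)) has_real_derivative dpart b f (y + s *\<^sub>R b)) (at s)"
        using hd1 b by (intro has_real_derivative_dpart) auto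
      then show "((\<lambda>s. f (y + s *\<^sub>R b) - s * D) has_real_derivative dpart b f (y + s *\<^sub>R b) - D) (at s)"
        by (auto intro!: derivative_eq_intros)
      define w where "w = basis_proj v S + s *\<^sub>R b"
      have "\<bar>dpart b f (z + w) - dpart b f z\<bar> \<le> M * (\<Sum>c\<in>Basis. \<bar>w \<bullet> c\<bar>)"
        using hd2 bd b inner_basis_proj_plus_le[OF S b insert(2) v s]
        unfolding w_def by (intro abs_diff_le_of_dpart_bound) auto
      also have "\<dots> \<le> M * (A + \<bar>v \<bullet> b\<bar>)"
        unfolding w_def A_def using sum_abs_inner_basis_proj_plus[OF S b, of v s] M s
        by (intro mult_left_mono) auto
      finally show "\<bar>dpart b f (y + s *\<^sub>R b) - D\<bar> \<le> M * (A + \<bar>v \<bullet> b\<bar>)"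
        unfolding y_def w_def D_def by (simp add: add.assoc)
    qed
    then have "\<bar>f (z + basis_proj v (insert b S)) - f y - (v \<bullet> b) * D\<bar> \<le> M * (A + \<bar>v \<bullet> b\<bar>) * \<bar>v \<bullet> b\<bar>"
      using insert(1,2) by (simp add: basis_proj_insert y_def add.assoc algebra_simps)
    moreover have "\<bar>f y - f z - (\<Sum>b\<in>S. (v \<bullet> b) * dpart b f z)\<bar> \<le> M * A\<^sup>2"
      using insert S unfolding y_def A_def by blast
    moreover have "M * (A + \<bar>v \<bullet> b\<bar>) * \<bar>v \<bullet> b\<bar> + M * A\<^sup>2 \<le> M * (A + \<bar>v \<bullet> b\<bar>)\<^sup>2"
      using mult_nonneg_nonneg[OF mult_nonneg_nonneg[OF M A0] abs_ge_zero[of "v \<bullet> b"]]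
      by (simp add: power2_eq_square algebra_simps)
    ultimately show ?case
      using insert(1,2) unfolding A_def D_def y_def by (simp add: add.commute abs_le_iff)
  qed
  from this[of Basis] show ?thesis by simp
qed

lemma continuous_on_of_dpart_bound:
  fixes f :: "'a::euclidean_space \<Rightarrow> real"
  assumes hd: "\<forall>b\<in>Basis. \<forall>x. has_dpart b f x" and bd: "\<forall>b\<in>Basis. \<forall>x. \<bar>dpart b f x\<bar> \<le> M"
  shows "continuous_on UNIV f"
proof (rule lipschitz_on_continuous_on)
  have M: "0 \<le> M"
    using bd nonempty_Basis by (meson abs_ge_zero all_not_in_conv order_trans)
  show "(M * real DIM('a))-lipschitz_on UNIV f"
  proof (rule lipschitz_onI)
    fix x y :: 'a
    have "\<bar>f (y + (x - y)) - f y\<bar> \<le> M * (\<Sum>c\<in>Basis. \<bar>(x - y) \<bullet> c\<bar>)"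
      by (rule abs_diff_le_of_dpart_bound[OF hd, where r="norm (x - y)"]) (use bd Basis_le_norm in auto)
    also have "\<dots> \<le> M * (\<Sum>c\<in>(Basis::'a set). norm (x - y))"
      using M by (intro mult_left_mono sum_mono Basis_le_norm) auto
    finally show "dist (f x) (f y) \<le> M * real DIM('a) * dist x y"
      by (simp add: dist_norm dist_real_def mult.assoc)
  qed (use M in simp)
qed

section \<open>The midpoint rule on grid cells\<close>

abbreviation cube :: "'a::euclidean_space \<Rightarrow> real \<Rightarrow> 'a set" where
  "cube z h \<equiv> cbox (z - (h/2) *\<^sub>R One) (z + (h/2) *\<^sub>R One)"

lemma has_integral_reflect_cube:
  fixes g :: "'a::euclidean_space \<Rightarrow> real"
  assumes "(g has_integral I) (cube z h)"
  shows "((\<lambda>x. g (2 *\<^sub>R z - x)) has_integral I) (cube z h)"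
proof -
  have into: "2 *\<^sub>R z - x \<in> cube z h" if "x \<in> cube z h" for x
    using that by (auto simp: mem_box inner_diff_left inner_add_left algebra_simps)
  have "(\<lambda>x. 2 *\<^sub>R z - x) ` cube z h = cube z h"
  proof
    show "cube z h \<subseteq> (\<lambda>x. 2 *\<^sub>R z - x) ` cube z h"
      using into by (force intro: image_eqI[where x = "2 *\<^sub>R z - _"])
  qed (use into in auto)
  moreover have "(\<lambda>x. (1 / (-1::real)) *\<^sub>R x + - ((1 / (-1::real)) *\<^sub>R (2 *\<^sub>R z))) = (\<lambda>x. 2 *\<^sub>R z - x)"
    by (simp add: fun_eq_iff)
  ultimately show ?thesis
    using has_integral_affinity[OF assms, of "-1" "2 *\<^sub>R z"] by simp
qed

lemma abs_second_difference_le: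
  fixes g :: "'a::euclidean_space \<Rightarrow> real"
  assumes C2: "C2_fun g" and M: "0 \<le> M"
    and bd: "\<forall>b\<in>Basis. \<forall>c\<in>Basis. \<forall>x. (\<forall>e\<in>Basis. \<bar>(x - z) \<bullet> e\<bar> \<le> r) \<longrightarrow> \<bar>dpart c (dpart b g) x\<bar> \<le> M"
    and v: "\<forall>c\<in>Basis. \<bar>v \<bullet> c\<bar> \<le> r"
  shows "\<bar>g (z + v) + g (z - v) - 2 * g z\<bar> \<le> 2 * M * (\<Sum>c\<in>Basis. \<bar>v \<bullet> c\<bar>)\<^sup>2"
proof -
  have hd1: "\<forall>b\<in>Basis. \<forall>x. has_dpart b g x" and hd2: "\<forall>b\<in>Basis. \<forall>c\<in>Basis. \<forall>x. has_dpart c (dpart b g) x"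
    using C2 unfolding C2_fun_def by auto
  define lin where "lin = (\<Sum>b\<in>Basis. (v \<bullet> b) * dpart b g z)"
  have "\<bar>g (z + v) - g z - lin\<bar> \<le> M * (\<Sum>c\<in>Basis. \<bar>v \<bullet> c\<bar>)\<^sup>2"
    unfolding lin_def by (rule abs_taylor1_remainder_le_of_dpart2_bound[OF hd1 hd2 bd v M])
  moreover have "\<bar>g (z + - v) - g z - (- lin)\<bar> \<le> M * (\<Sum>c\<in>Basis. \<bar>v \<bullet> c\<bar>)\<^sup>2"
    using abs_taylor1_remainder_le_of_dpart2_bound[OF hd1 hd2 bd _ M, of "- v"] v
    by (simp add: lin_def sum_negf)
  ultimately show ?thesis by (simp add: abs_le_iff)
qed

text \<open>Averaging \<open>g\<close> with its reflection through the centre cancels the linear Taylor term.\<close>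
lemma cube_integral_midpoint_error:
  fixes g :: "'a::euclidean_space \<Rightarrow> real"
  assumes C2: "C2_fun g" and cont: "continuous_on UNIV g"
    and h: "0 < h" "h \<le> 1" and M: "0 \<le> M"
    and bd: "\<forall>b\<in>Basis. \<forall>c\<in>Basis. \<forall>x. (\<forall>e\<in>Basis. \<bar>(x - z) \<bullet> e\<bar> \<le> 1/2) \<longrightarrow> \<bar>dpart c (dpart b g) x\<bar> \<le> M"
  shows "\<bar>integral (cube z h) g - h ^ DIM('a) * g z\<bar> \<le> M * (real DIM('a))\<^sup>2 * h ^ (DIM('a) + 2) / 4"
proof -
  define n where "n = real DIM('a)"
  define I where "I = integral (cube z h) g"
  have gI: "(g has_integral I) (cube z h)"
    unfolding I_def by (intro integrable_integral integrable_continuous continuous_on_subset[OF cont]) auto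
  have content: "Henstock_Kurzweil_Integration.content (cube z h) = h ^ DIM('a)"
    using h by (subst content_cbox) (auto simp: inner_diff_left inner_add_left)
  have "((\<lambda>x. g x + g (2 *\<^sub>R z - x) - 2 * g z) has_integral 2 * (I - h ^ DIM('a) * g z)) (cube z h)"
    by (rule has_integral_eq_rhs[OF has_integral_diff[OF has_integral_add[OF gI has_integral_reflect_cube[OF gI]]
          has_integral_const]]) (simp add: content algebra_simps)
  moreover have "norm (g x + g (2 *\<^sub>R z - x) - 2 * g z) \<le> M * n\<^sup>2 * h\<^sup>2 / 2" if x: "x \<in> cube z h" for x
  proof -
    have coord: "\<bar>(x - z) \<bullet> c\<bar> \<le> h/2" if "c \<in> Basis" for c
      using x that unfolding abs_le_iff by (auto simp: mem_box inner_diff_left inner_add_left)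
    then have "(\<Sum>c\<in>Basis. \<bar>(x - z) \<bullet> c\<bar>) \<le> n * (h/2)"
      unfolding n_def using sum_mono[of Basis "\<lambda>c. \<bar>(x - z) \<bullet> c\<bar>" "\<lambda>_. h/2"] by simp
    then have "2 * M * (\<Sum>c\<in>Basis. \<bar>(x - z) \<bullet> c\<bar>)\<^sup>2 \<le> 2 * M * (n * (h/2))\<^sup>2"
      using M by (intro mult_left_mono power_mono) (auto simp: sum_nonneg)
    moreover have "\<bar>g (z + (x - z)) + g (z - (x - z)) - 2 * g z\<bar> \<le> 2 * M * (\<Sum>c\<in>Basis. \<bar>(x - z) \<bullet> c\<bar>)\<^sup>2"
      using coord h by (intro abs_second_difference_le[OF C2 M bd]) force
    moreover have "z - (x - z) = 2 *\<^sub>R z - x" by (simp add: scaleR_2)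
    ultimately show ?thesis by (simp add: power2_eq_square mult_ac)
  qed
  ultimately have "norm (2 * (I - h ^ DIM('a) * g z))
      \<le> (M * n\<^sup>2 * h\<^sup>2 / 2) * Henstock_Kurzweil_Integration.content (cube z h)"
    using M by (intro has_integral_bound) auto
  then show ?thesis
    unfolding I_def n_def content real_norm_def abs_mult by (simp add: power_add field_simps power2_eq_square)
qed

text \<open>Half-open, so that the cells around the points of \<open>grid L\<close> partition the space.\<close>
definition grid_cell :: "real \<Rightarrow> 'a::euclidean_space \<Rightarrow> 'a set" where
  "grid_cell h z = {x. \<forall>b\<in>Basis. z \<bullet> b - h/2 \<le> x \<bullet> b \<and> x \<bullet> b < z \<bullet> b + h/2}"

lemma grid_cell_cover:
  fixes x :: "'a::euclidean_space"
  assumes L: "L > 0"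
  obtains z where "z \<in> grid L" "x \<in> grid_cell (1/L) z"
proof
  define k where "k b = \<lfloor>L * (x \<bullet> b) + 1/2\<rfloor>" for b :: 'a
  define z where "z = (\<Sum>b\<in>Basis. (of_int (k b) / L) *\<^sub>R b)"
  have zb: "z \<bullet> b = of_int (k b) / L" if "b \<in> Basis" for b
    unfolding z_def using that by (simp add: inner_sum_left inner_Basis if_distrib sum.delta cong: if_cong)
  show "z \<in> grid L" unfolding grid_def using zb L by auto
  show "x \<in> grid_cell (1/L) z"
    unfolding grid_cell_def
  proof (intro CollectI ballI)
    fix b :: 'a assume b: "b \<in> Basis"
    have "of_int (k b) \<le> L * (x \<bullet> b) + 1/2" "L * (x \<bullet> b) + 1/2 < of_int (k b) + 1"
      unfolding k_def by linarith+
    then show "z \<bullet> b - 1 / L / 2 \<le> x \<bullet> b \<and> x \<bullet> b < z \<bullet> b + 1 / L / 2"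
      using L unfolding zb[OF b] by (simp add: field_simps)
  qed
qed

lemma grid_cell_unique:
  fixes z z' :: "'a::euclidean_space"
  assumes L: "L > 0" and z: "z \<in> grid L" "z' \<in> grid L"
    and x: "x \<in> grid_cell (1/L) z" "x \<in> grid_cell (1/L) z'"
  shows "z = z'"
proof (rule euclidean_eqI)
  fix b :: 'a assume b: "b \<in> Basis"
  have "L * (z \<bullet> b) - L * (z' \<bullet> b) \<in> \<int>"
    using z b unfolding grid_def by (auto intro: Ints_diff)
  then obtain k where k: "L * (z \<bullet> b) - L * (z' \<bullet> b) = of_int k"
    by (rule Ints_cases)
  have "z \<bullet> b - 1/L/2 \<le> x \<bullet> b" "x \<bullet> b < z \<bullet> b + 1/L/2"
       "z' \<bullet> b - 1/L/2 \<le> x \<bullet> b" "x \<bullet> b < z' \<bullet> b + 1/L/2"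
    using x b unfolding grid_cell_def by auto
  then have "\<bar>L * (z \<bullet> b) - L * (z' \<bullet> b)\<bar> < 1"
    using L by (simp add: field_simps abs_less_iff)
  then have "k = 0" unfolding k by linarith
  then show "z \<bullet> b = z' \<bullet> b" using k L by simp
qed

lemma grid_cell_sets: "grid_cell h z \<in> sets lborel"
proof -
  have "grid_cell h z = (\<Inter>b\<in>Basis. {x. z \<bullet> b - h/2 \<le> x \<bullet> b} \<inter> {x. x \<bullet> b < z \<bullet> b + h/2})"
    unfolding grid_cell_def by auto
  also have "\<dots> \<in> sets lborel"
    by (intro sets.finite_INT sets.Int borel_closed borel_open closed_halfspace_component_ge
        open_halfspace_component_lt) auto
  finally show ?thesis .
qed

lemma grid_cell_subset_cube: "0 \<le> h \<Longrightarrow> grid_cell h z \<subseteq> cube z h"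
  unfolding grid_cell_def by (auto simp: mem_box inner_diff_left inner_add_left less_imp_le)

lemma negligible_cube_diff_grid_cell: "negligible (cube z h - grid_cell h z)"
proof (rule negligible_subset)
  show "negligible (\<Union>b\<in>Basis. {x. b \<bullet> x = z \<bullet> b + h/2})"
    by (intro negligible_Union finite_imageI) (auto intro!: negligible_hyperplane simp: nonzero_Basis)
  show "cube z h - grid_cell h z \<subseteq> (\<Union>b\<in>Basis. {x. b \<bullet> x = z \<bullet> b + h/2})"
  proof
    fix x assume x: "x \<in> cube z h - grid_cell h z"
    then obtain b :: 'a where b: "b \<in> Basis" "\<not> (z \<bullet> b - h/2 \<le> x \<bullet> b \<and> x \<bullet> b < z \<bullet> b + h/2)"
      unfolding grid_cell_def by auto
    moreover have "z \<bullet> b - h/2 \<le> x \<bullet> b" "x \<bullet> b \<le> z \<bullet> b + h/2"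
      using x b(1) by (auto simp: mem_box inner_diff_left inner_add_left)
    ultimately show "x \<in> (\<Union>b\<in>Basis. {x. b \<bullet> x = z \<bullet> b + h/2})"
      by (auto simp: inner_commute)
  qed
qed

lemma integral_grid_cell_eq_cube:
  fixes g :: "'a::euclidean_space \<Rightarrow> real"
  assumes "integrable lborel g" "continuous_on UNIV g" "0 \<le> h"
  shows "(LINT x:grid_cell h z|lborel. g x) = integral (cube z h) g"
proof -
  have "(g has_integral integral (cube z h) g) (cube z h)"
    by (intro integrable_integral integrable_continuous continuous_on_subset[OF assms(2)]) auto
  then have "(g has_integral integral (cube z h) g) (grid_cell h z)"
  proof (subst has_integral_spike_set_eq)
    show "negligible {x \<in> grid_cell h z - cube z h. g x \<noteq> 0}"
      by (rule negligible_subset[OF negligible_empty]) (use grid_cell_subset_cube[OF assms(3)] in auto)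
    show "negligible {x \<in> cube z h - grid_cell h z. g x \<noteq> 0}"
      by (rule negligible_subset[OF negligible_cube_diff_grid_cell]) auto
  qed
  moreover have "set_integrable lborel (grid_cell h z) g"
    unfolding set_integrable_def by (rule integrable_mult_indicator[OF grid_cell_sets assms(1)])
  ultimately show ?thesis
    using set_borel_integral_eq_integral(2) integral_unique by metis
qed

lemma integral_eq_infsum_cube_integrals:
  fixes g :: "'a::euclidean_space \<Rightarrow> real"
  assumes L: "L > 0" and int: "integrable lborel g" and cont: "continuous_on UNIV g"
    and summable: "(\<lambda>z. integral (cube z (1/L)) g) summable_on grid L"
  shows "(\<integral>x. g x \<partial>lborel) = (\<Sum>\<^sub>\<infinity>z\<in>grid L. integral (cube z (1/L)) g)"
proof -
  define e where "e = from_nat_into (grid L :: 'a set)"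
  have bij: "bij_betw e UNIV (grid L)"
    unfolding e_def using countable_grid[of L] infinite_grid[of L] L
    by (intro bij_betw_from_nat_into) auto
  define A where "A i = grid_cell (1/L) (e i)" for i
  have "(\<Union>i. A i) = UNIV"
  proof (intro equalityI subsetI)
    fix x :: 'a
    obtain z where "z \<in> grid L" "x \<in> grid_cell (1/L) z" using grid_cell_cover[OF L] .
    moreover from this(1) obtain i where "e i = z"
      using bij_betw_imp_surj_on[OF bij] by (metis imageE)
    ultimately show "x \<in> (\<Union>i. A i)" unfolding A_def by blast
  qed auto
  then have "(\<integral>x. g x \<partial>lborel) = (LINT x:(\<Union>i. A i)|lborel. g x)"
    by (simp add: set_lebesgue_integral_def)
  also have "\<dots> = (\<Sum>i. (LINT x:A i|lborel. g x))"
  proof (rule lebesgue_integral_countable_add)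
    show "A i \<inter> A j = {}" if "i \<noteq> j" for i j
    proof (rule ccontr)
      assume "A i \<inter> A j \<noteq> {}"
      then have "e i = e j"
        using grid_cell_unique[OF L] bij_betw_apply[OF bij] unfolding A_def by blast
      with that show False using bij_betw_imp_inj_on[OF bij] by (simp add: inj_eq)
    qed
    show "set_integrable lborel (\<Union>i. A i) g"
      using int \<open>(\<Union>i. A i) = UNIV\<close> by (simp add: set_integrable_def)
  qed (use grid_cell_sets in \<open>simp add: A_def\<close>)
  also have "\<dots> = (\<Sum>i. integral (cube (e i) (1/L)) g)"
    using L by (simp add: A_def integral_grid_cell_eq_cube[OF int cont])
  also have "\<dots> = (\<Sum>\<^sub>\<infinity>z\<in>grid L. integral (cube z (1/L)) g)"
  proof -
    have "((\<lambda>i. integral (cube (e i) (1/L)) g) has_sum (\<Sum>\<^sub>\<infinity>z\<in>grid L. integral (cube z (1/L)) g)) UNIV"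
      by (rule has_sum_reindex_bij_betw[OF bij, THEN iffD2]) (rule has_sum_infsum[OF summable])
    then show ?thesis by (simp add: sums_unique[symmetric] has_sum_imp_sums)
  qed
  finally show ?thesis .
qed

lemma integrable_of_le_cauchy_weight:
  fixes g :: "'a::euclidean_space \<Rightarrow> real"
  assumes "continuous_on UNIV g" and "\<And>x. \<bar>g x\<bar> \<le> A * cauchy_weight x"
  shows "integrable lborel g"
proof (rule Bochner_Integration.integrable_bound)
  show "integrable lborel (\<lambda>x::'a. A * cauchy_weight x)"
    by (intro integrable_mult_right integrable_cauchy_weight)
  show "g \<in> borel_measurable lborel"
    using borel_measurable_continuous_onI[OF assms(1)] by simp
  show "AE x in lborel. norm (g x) \<le> norm (A * cauchy_weight x)"
    using assms(2) by (intro AE_I2) (metis abs_ge_self order_trans real_norm_def)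
qed

lemma cube_integral_midpoint_error_weighted:
  fixes g :: "'a::euclidean_space \<Rightarrow> real"
  assumes C2: "C2_fun g" and cont: "continuous_on UNIV g" and L: "L \<ge> 1" and B: "0 \<le> B"
    and bd: "\<forall>b\<in>Basis. \<forall>c\<in>Basis. \<forall>x. \<bar>dpart c (dpart b g) x\<bar> \<le> B * cauchy_weight x"
  shows "\<bar>integral (cube z (1/L)) g - (1/L) ^ DIM('a) * g z\<bar>
    \<le> B * (5/2) ^ DIM('a) * (real DIM('a))\<^sup>2 * (1/L) ^ (DIM('a) + 2) / 4 * cauchy_weight z"
proof -
  have "\<bar>dpart c (dpart b g) x\<bar> \<le> B * (5/2) ^ DIM('a) * cauchy_weight z"
    if "b \<in> Basis" "c \<in> Basis" "\<forall>e\<in>Basis. \<bar>(x - z) \<bullet> e\<bar> \<le> 1/2" for b c x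
  proof -
    have "\<bar>dpart c (dpart b g) x\<bar> \<le> B * cauchy_weight x" using bd that by blast
    also have "\<dots> \<le> B * ((5/2) ^ DIM('a) * cauchy_weight z)"
      by (rule mult_left_mono[OF cauchy_weight_shift[OF that(3)] B])
    finally show ?thesis by (simp add: mult.assoc)
  qed
  moreover have "0 \<le> B * (5/2) ^ DIM('a) * cauchy_weight z"
    using B cauchy_weight_pos[of z] by simp
  ultimately have "\<bar>integral (cube z (1/L)) g - (1/L) ^ DIM('a) * g z\<bar>
    \<le> B * (5/2) ^ DIM('a) * cauchy_weight z * (real DIM('a))\<^sup>2 * (1/L) ^ (DIM('a) + 2) / 4"
    using L by (intro cube_integral_midpoint_error[OF C2 cont]) auto
  then show ?thesis by (simp add: field_simps)
qed

lemma grid_sum_approximates_integral: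
  fixes g :: "'a::euclidean_space \<Rightarrow> real"
  assumes L: "L \<ge> 1" and C2: "C2_fun g" and cont: "continuous_on UNIV g"
    and A: "0 \<le> A" and gb: "\<And>x. \<bar>g x\<bar> \<le> A * cauchy_weight x"
    and B: "0 \<le> B" and bd: "\<forall>b\<in>Basis. \<forall>c\<in>Basis. \<forall>x. \<bar>dpart c (dpart b g) x\<bar> \<le> B * cauchy_weight x"
  shows "\<bar>(\<integral>x. g x \<partial>lborel) - (1/L) ^ DIM('a) * infsum g (grid L)\<bar>
    \<le> B * 15 ^ DIM('a) * (real DIM('a))\<^sup>2 / L\<^sup>2"
proof -
  define n where "n = DIM('a)"
  define F where "F z = integral (cube z (1/L)) g" for z
  define E where "E z = F z - (1/L) ^ n * g z" for z
  define c where "c = B * (5/2) ^ n * (real n)\<^sup>2 * (1/L) ^ (n + 2) / 4"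
  have c: "0 \<le> c" unfolding c_def using B L by simp
  have "\<bar>E z\<bar> \<le> c * cauchy_weight z" for z
    unfolding E_def F_def c_def n_def
    by (rule cube_integral_midpoint_error_weighted[OF C2 cont L B bd])
  then have E: "E summable_on grid L" and E_le: "\<bar>infsum E (grid L)\<bar> \<le> c * (6*L) ^ n"
    using grid_dominated_summable[OF L c, of E] unfolding n_def by auto
  have g: "(\<lambda>z. (1/L) ^ n * g z) summable_on grid L"
    using grid_dominated_summable(1)[OF L A gb] by (rule summable_on_cmult_right)
  have F_eq: "F = (\<lambda>z. E z + (1/L) ^ n * g z)" by (simp add: E_def fun_eq_iff)
  have "F summable_on grid L"
    unfolding F_eq by (rule summable_on_add[OF E g])
  then have "(\<integral>x. g x \<partial>lborel) = infsum F (grid L)"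
    unfolding F_def using L
    by (intro integral_eq_infsum_cube_integrals integrable_of_le_cauchy_weight[OF cont gb] cont) auto
  also have "\<dots> = infsum E (grid L) + (1/L) ^ n * infsum g (grid L)"
    unfolding F_eq by (simp add: infsum_add[OF E g] infsum_cmult_right')
  finally have "\<bar>(\<integral>x. g x \<partial>lborel) - (1/L) ^ n * infsum g (grid L)\<bar> \<le> c * (6*L) ^ n"
    using E_le by simp
  also have "c * (6*L) ^ n = B * (real n)\<^sup>2 / 4 * ((5/2) ^ n * 6 ^ n) * ((1/L) ^ (n + 2) * L ^ n)"
    unfolding c_def power_mult_distrib by (simp add: field_simps)
  also have "\<dots> = B * 15 ^ n * (real n)\<^sup>2 / (4 * L\<^sup>2)"
    using L by (simp add: power_add power_one_over power2_eq_square mult_ac flip: power_mult_distrib)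
  also have "\<dots> \<le> B * 15 ^ n * (real n)\<^sup>2 / L\<^sup>2"
    using B L by (intro divide_left_mono) auto
  finally show ?thesis unfolding n_def .
qed

section \<open>Removing the hyperplanes\<close>

lemma Basis_vec_vec_cases:
  fixes b :: "(real^'d)^'k"
  assumes "b \<in> Basis"
  obtains i j where "b = axis i (axis j 1)"
  using assms unfolding Basis_vec_def by auto

lemma inner_axis_axis: "(z :: (real^'d)^'k) \<bullet> axis i (axis j 1) = z $ i $ j"
  by (simp add: inner_axis)

lemma latt_k_eq_grid: "latt_k L = (grid L :: ((real^'d)^'k) set)"
proof -
  have basis: "axis i (axis j 1) \<in> (Basis :: ((real^'d)^'k) set)" for i j
    unfolding Basis_vec_def by auto
  show ?thesis
    unfolding latt_k_def latt_def grid_def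
    by (auto elim!: Basis_vec_vec_cases simp: inner_axis_axis) (metis basis inner_axis_axis)
qed

text \<open>On the hyperplane, the block \<open>z $ i0\<close> is determined by the other blocks, so forgetting
  it is injective and loses \<open>CARD('d)\<close> free coordinates.\<close>
lemma sum_cauchy_weight_grid_hyperplane_le:
  fixes F :: "((real^'d)^'k) set" and a :: "real^'d"
  assumes L: "L \<ge> 1" and ci0: "c i0 \<noteq> 0" and fin: "finite F"
    and F: "F \<subseteq> grid L \<inter> {z. a + (\<Sum>i\<in>UNIV. c i *\<^sub>R z $ i) = 0}"
  shows "(\<Sum>z\<in>F. cauchy_weight z) \<le> (6*L) ^ (DIM((real^'d)^'k) - CARD('d))"
proof -
  define drop where "drop z = (\<chi> i. if i = i0 then 0 else z $ i)" for z :: "(real^'d)^'k"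
  define V :: "((real^'d)^'k) set" where "V = range (\<lambda>j. axis i0 (axis j 1))"
  have V: "V \<subseteq> Basis" unfolding V_def Basis_vec_def by auto
  have "inj (\<lambda>j::'d. axis i0 (axis j (1::real)))"
    by (rule injI) (simp add: axis_eq_axis)
  then have card_V: "card (Basis - V) = DIM((real^'d)^'k) - CARD('d)"
    using card_Diff_subset[OF finite_subset[OF V finite_Basis] V] unfolding V_def
    by (simp add: card_image)
  have inner_drop: "drop z \<bullet> axis i (axis j 1) = (if i = i0 then 0 else z $ i $ j)" for z i j
    unfolding drop_def by (simp add: inner_axis_axis)
  have inj: "inj_on drop F"
  proof (rule inj_onI)
    fix z z' assume z: "z \<in> F" and z': "z' \<in> F" and eq: "drop z = drop z'"
    have other: "z $ i = z' $ i" if "i \<noteq> i0" for i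
      using arg_cong[OF eq, of "\<lambda>v. v $ i"] that unfolding drop_def by simp
    have "(\<Sum>i\<in>UNIV. c i *\<^sub>R z $ i) = - a" "(\<Sum>i\<in>UNIV. c i *\<^sub>R z' $ i) = - a"
      using F z z' by (auto simp: eq_neg_iff_add_eq_0 add.commute)
    moreover have "(\<Sum>i\<in>UNIV - {i0}. c i *\<^sub>R z $ i) = (\<Sum>i\<in>UNIV - {i0}. c i *\<^sub>R z' $ i)"
      using other by (intro sum.cong) auto
    ultimately have "z $ i0 = z' $ i0"
      using ci0 by (simp add: sum.remove[of UNIV i0]) (metis add_right_cancel scaleR_cancel_left)
    then show "z = z'" using other by (metis vec_eq_iff)
  qed
  have "cauchy_weight z \<le> cauchy_weight (drop z)" for z
    unfolding cauchy_weight_def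
  proof (intro prod_mono conjI)
    fix b :: "(real^'d)^'k" assume "b \<in> Basis"
    then obtain i j where b: "b = axis i (axis j 1)" by (rule Basis_vec_vec_cases)
    show "cauchy_kernel (z \<bullet> b) \<le> cauchy_kernel (drop z \<bullet> b)"
      unfolding b inner_drop using cauchy_kernel_le_1 by (simp add: cauchy_kernel_def[of 0] inner_axis_axis)
  qed (simp add: cauchy_kernel_pos less_imp_le)
  then have "(\<Sum>z\<in>F. cauchy_weight z) \<le> (\<Sum>y\<in>drop ` F. cauchy_weight y)"
    by (simp add: sum.reindex[OF inj] sum_mono)
  also have "\<dots> \<le> (6*L) ^ card (Basis - V)"
  proof (rule sum_cauchy_weight_grid_le[OF V L finite_imageI[OF fin]])
    have "L * (drop z \<bullet> b) \<in> \<int>" if "z \<in> F" "b \<in> Basis" for z b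
    proof -
      obtain i j where b: "b = axis i (axis j 1)" using \<open>b \<in> Basis\<close> by (rule Basis_vec_vec_cases)
      have "L * (z \<bullet> b) \<in> \<int>" using F that unfolding grid_def by blast
      then show ?thesis unfolding b inner_drop by (simp add: inner_axis_axis)
    qed
    then show "drop ` F \<subseteq> {x \<in> grid L. \<forall>b\<in>V. x \<bullet> b = 0}"
      unfolding V_def grid_def by (auto simp: inner_drop)
  qed
  finally show ?thesis unfolding card_V .
qed

lemma sum_le_sum_over_cover:
  fixes f :: "'a \<Rightarrow> real"
  assumes "finite F" "finite J" "\<And>x. x \<in> F \<Longrightarrow> \<exists>j\<in>J. x \<in> D j" "\<And>x. 0 \<le> f x"
  shows "(\<Sum>x\<in>F. f x) \<le> (\<Sum>j\<in>J. \<Sum>x\<in>F \<inter> D j. f x)"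
proof -
  have "(\<Sum>x\<in>F. f x) \<le> (\<Sum>x\<in>F. \<Sum>j\<in>J. if x \<in> D j then f x else 0)"
  proof (rule sum_mono)
    fix x assume "x \<in> F"
    then obtain j where "j \<in> J" "x \<in> D j" using assms(3) by blast
    then show "f x \<le> (\<Sum>j\<in>J. if x \<in> D j then f x else 0)"
      using member_le_sum[of j J "\<lambda>j. if x \<in> D j then f x else 0"] assms(2,4) by simp
  qed
  also have "\<dots> = (\<Sum>j\<in>J. \<Sum>x\<in>F \<inter> D j. f x)"
    using assms(1) by (subst sum.swap) (simp add: sum.inter_filter Int_def)
  finally show ?thesis .
qed

lemma sum_cauchy_weight_grid_Dset_le:
  fixes s :: "real^'d" and F :: "((real^'d)^'k) set"
  assumes L: "L \<ge> 1" and c_nz: "\<forall>j<p. \<exists>i. c j i \<noteq> 0" and fin: "finite F"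
    and F: "F \<subseteq> grid L \<inter> Dset p c0 c s"
  shows "(\<Sum>z\<in>F. cauchy_weight z) \<le> real p * (6*L) ^ (DIM((real^'d)^'k) - CARD('d))"
proof -
  define H where "H j = {z::(real^'d)^'k. c0 j *\<^sub>R s + (\<Sum>i\<in>UNIV. c j i *\<^sub>R z $ i) = 0}" for j
  have "(\<Sum>z\<in>F. cauchy_weight z) \<le> (\<Sum>j<p. \<Sum>z\<in>F \<inter> H j. cauchy_weight z)"
    using F fin by (intro sum_le_sum_over_cover) (auto simp: Dset_def H_def cauchy_weight_pos less_imp_le)
  also have "\<dots> \<le> (\<Sum>j<p. (6*L) ^ (DIM((real^'d)^'k) - CARD('d)))"
  proof (rule sum_mono)
    fix j assume "j \<in> {..<p}"
    then obtain i0 where "c j i0 \<noteq> 0" using c_nz by auto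
    then show "(\<Sum>z\<in>F \<inter> H j. cauchy_weight z) \<le> (6*L) ^ (DIM((real^'d)^'k) - CARD('d))"
      using F fin unfolding H_def by (intro sum_cauchy_weight_grid_hyperplane_le[OF L]) auto
  qed
  finally show ?thesis by simp
qed

lemma abs_infsum_grid_Dset_le:
  fixes s :: "real^'d" and g :: "(real^'d)^'k \<Rightarrow> real"
  assumes L: "L \<ge> 1" and c_nz: "\<forall>j<p. \<exists>i. c j i \<noteq> 0"
    and A: "0 \<le> A" and gb: "\<And>z. \<bar>g z\<bar> \<le> A * cauchy_weight z"
  shows "\<bar>infsum g (grid L \<inter> Dset p c0 c s)\<bar> \<le> A * (real p * (6*L) ^ (DIM((real^'d)^'k) - CARD('d)))"
proof -
  define D where "D = grid L \<inter> Dset p c0 c s"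
  have abs: "(\<lambda>z. \<bar>g z\<bar>) summable_on D"
    unfolding D_def using grid_dominated_summable(2)[OF L A gb] by (rule summable_on_subset_banach) auto
  then have "\<bar>infsum g D\<bar> \<le> infsum (\<lambda>z. \<bar>g z\<bar>) D"
    using norm_infsum_bound[of g D] by simp
  also have "\<dots> \<le> A * (real p * (6*L) ^ (DIM((real^'d)^'k) - CARD('d)))"
  proof (rule infsum_le_finite_sums[OF abs])
    fix F assume F: "finite F" "F \<subseteq> D"
    have "(\<Sum>z\<in>F. \<bar>g z\<bar>) \<le> A * (\<Sum>z\<in>F. cauchy_weight z)"
      using gb by (simp add: sum_distrib_left sum_mono)
    also have "\<dots> \<le> A * (real p * (6*L) ^ (DIM((real^'d)^'k) - CARD('d)))"
      using F unfolding D_def by (intro mult_left_mono sum_cauchy_weight_grid_Dset_le[OF L c_nz] A)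
    finally show "(\<Sum>z\<in>F. \<bar>g z\<bar>) \<le> A * (real p * (6*L) ^ (DIM((real^'d)^'k) - CARD('d)))" .
  qed
  finally show ?thesis unfolding D_def .
qed

lemma power_one_over_mult_power_le:
  fixes L :: real
  assumes "L \<ge> 1" "2 \<le> d" "d \<le> n"
  shows "(1/L) ^ n * (6*L) ^ (n - d) \<le> 6 ^ n / L\<^sup>2"
proof -
  have "(1/L) ^ n * (6*L) ^ (n - d) = 6 ^ (n - d) / L ^ d"
    using assms by (simp add: power_mult_distrib power_one_over power_diff field_simps)
  also have "\<dots> \<le> 6 ^ n / L\<^sup>2"
    using assms by (intro frac_le power_increasing) auto
  finally show ?thesis .
qed

lemma grid_sum_off_Dset_approximates_integral:
  fixes s :: "real^'d" and g :: "(real^'d)^'k \<Rightarrow> real"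
  assumes L: "L \<ge> 1" and d2: "CARD('d) \<ge> 2" and c_nz: "\<forall>j<p. \<exists>i. c j i \<noteq> 0"
    and C2: "C2_fun g" and cont: "continuous_on UNIV g"
    and A: "0 \<le> A" and gb: "\<And>z. \<bar>g z\<bar> \<le> A * cauchy_weight z"
    and B: "0 \<le> B" and bd: "\<forall>b\<in>Basis. \<forall>c\<in>Basis. \<forall>z. \<bar>dpart c (dpart b g) z\<bar> \<le> B * cauchy_weight z"
  shows "\<bar>(1/L) ^ DIM((real^'d)^'k) * infsum g (latt_k L - Dset p c0 c s) - (\<integral>z. g z \<partial>lborel)\<bar>
    \<le> (B * 15 ^ DIM((real^'d)^'k) * (real DIM((real^'d)^'k))\<^sup>2 + real p * A * 6 ^ DIM((real^'d)^'k)) / L\<^sup>2"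
proof -
  define n where "n = DIM((real^'d)^'k)"
  define D where "D = grid L \<inter> Dset p c0 c s"
  have "CARD('d) \<le> n" unfolding n_def by simp
  have g: "g summable_on grid L" by (rule grid_dominated_summable(1)[OF L A gb])
  have "infsum g (latt_k L - Dset p c0 c s) = infsum g (grid L - D)"
    unfolding latt_k_eq_grid D_def by (simp add: Diff_Int)
  also have "\<dots> = infsum g (grid L) - infsum g D"
    using g by (intro infsum_Diff summable_on_subset_banach[OF g]) (auto simp: D_def)
  finally have split: "(1/L) ^ n * infsum g (latt_k L - Dset p c0 c s) - (\<integral>z. g z \<partial>lborel)
      = ((1/L) ^ n * infsum g (grid L) - (\<integral>z. g z \<partial>lborel)) - (1/L) ^ n * infsum g D"
    by (simp add: right_diff_distrib)
  have "\<bar>(1/L) ^ n * infsum g (grid L) - (\<integral>z. g z \<partial>lborel)\<bar> \<le> B * 15 ^ n * (real n)\<^sup>2 / L\<^sup>2"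
    using grid_sum_approximates_integral[OF L C2 cont A gb B bd] unfolding n_def by linarith
  moreover have "\<bar>(1/L) ^ n * infsum g D\<bar> \<le> real p * A * 6 ^ n / L\<^sup>2"
  proof -
    have "\<bar>(1/L) ^ n * infsum g D\<bar> \<le> (1/L) ^ n * (A * (real p * (6*L) ^ (n - CARD('d))))"
      using abs_infsum_grid_Dset_le[OF L c_nz A gb] L unfolding D_def n_def
      by (simp add: abs_mult mult_left_mono)
    also have "\<dots> = real p * A * ((1/L) ^ n * (6*L) ^ (n - CARD('d)))" by (simp add: mult_ac)
    also have "\<dots> \<le> real p * A * (6 ^ n / L\<^sup>2)"
      using A d2 \<open>CARD('d) \<le> n\<close> by (intro mult_left_mono power_one_over_mult_power_le[OF L]) auto
    finally show ?thesis by simp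
  qed
  ultimately show ?thesis
    unfolding n_def[symmetric] split by (simp add: add_divide_distrib abs_triangle_ineq4 order_trans)
qed

section \<open>Integration over the parameter\<close>

lemma borel_measurable_infsum:
  fixes f :: "'b \<Rightarrow> 'c \<Rightarrow> real"
  assumes A: "countable A" and meas: "\<And>z. z \<in> A \<Longrightarrow> (\<lambda>\<theta>. f \<theta> z) \<in> borel_measurable M"
    and summable: "\<And>\<theta>. \<theta> \<in> space M \<Longrightarrow> f \<theta> summable_on A"
  shows "(\<lambda>\<theta>. infsum (f \<theta>) A) \<in> borel_measurable M"
proof (cases "finite A")
  case True
  then show ?thesis using meas by simp
next
  case False
  define e where "e = from_nat_into A"
  have bij: "bij_betw e UNIV A" unfolding e_def using A False by (rule bij_betw_from_nat_into)
  have "infsum (f \<theta>) A = (\<Sum>i. f \<theta> (e i))" if "\<theta> \<in> space M" for \<theta>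
  proof -
    have "((\<lambda>i. f \<theta> (e i)) has_sum infsum (f \<theta>) A) UNIV"
      by (rule has_sum_reindex_bij_betw[OF bij, THEN iffD2]) (rule has_sum_infsum[OF summable[OF that]])
    then show ?thesis by (simp add: sums_unique has_sum_imp_sums)
  qed
  moreover have "(\<lambda>\<theta>. \<Sum>i. f \<theta> (e i)) \<in> borel_measurable M"
    using meas bij_betw_apply[OF bij] by auto
  ultimately show ?thesis by (subst measurable_cong) auto
qed

lemma integral_diff_le_of_pointwise:
  fixes f g w :: "'a \<Rightarrow> real"
  assumes w: "integrable M w" and f: "f \<in> borel_measurable M" and g: "integrable M g"
    and le: "\<And>\<theta>. \<theta> \<in> space M \<Longrightarrow> \<bar>f \<theta> - g \<theta>\<bar> \<le> K * w \<theta>"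
  shows "integrable M f" and "\<bar>(\<integral>\<theta>. f \<theta> \<partial>M) - (\<integral>\<theta>. g \<theta> \<partial>M)\<bar> \<le> K * (\<integral>\<theta>. w \<theta> \<partial>M)"
proof -
  have fg: "integrable M (\<lambda>\<theta>. f \<theta> - g \<theta>)"
    by (rule Bochner_Integration.integrable_bound[OF integrable_mult_right[OF w, of K]])
       (use f g le in \<open>auto intro!: AE_I2 intro: order_trans[OF _ abs_ge_self]\<close>)
  then show f_int: "integrable M f"
    using Bochner_Integration.integrable_add[OF fg g] by simp
  have "\<bar>(\<integral>\<theta>. f \<theta> \<partial>M) - (\<integral>\<theta>. g \<theta> \<partial>M)\<bar> = \<bar>\<integral>\<theta>. f \<theta> - g \<theta> \<partial>M\<bar>"
    using f_int g by simp
  also have "\<dots> \<le> (\<integral>\<theta>. \<bar>f \<theta> - g \<theta>\<bar> \<partial>M)"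
    using integral_norm_bound[of M "\<lambda>\<theta>. f \<theta> - g \<theta>"] by simp
  also have "\<dots> \<le> (\<integral>\<theta>. K * w \<theta> \<partial>M)"
    using fg w le by (intro integral_mono) auto
  finally show "\<bar>(\<integral>\<theta>. f \<theta> \<partial>M) - (\<integral>\<theta>. g \<theta> \<partial>M)\<bar> \<le> K * (\<integral>\<theta>. w \<theta> \<partial>M)" by simp
qed

lemma integral_grid_sum_off_Dset_error:
  fixes s :: "real^'d" and g :: "(real^'d)^'k \<Rightarrow> 'a \<Rightarrow> real" and M :: "'a measure"
  assumes L: "L \<ge> 1" and d2: "CARD('d) \<ge> 2" and c_nz: "\<forall>j<p. \<exists>i. c j i \<noteq> 0"
    and meas: "(\<lambda>(\<theta>, z). g z \<theta>) \<in> borel_measurable (M \<Otimes>\<^sub>M lborel)"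
    and w: "integrable M w" and w_nonneg: "\<And>\<theta>. \<theta> \<in> space M \<Longrightarrow> 0 \<le> w \<theta>"
    and C2: "\<And>\<theta>. \<theta> \<in> space M \<Longrightarrow> C2_fun (\<lambda>z. g z \<theta>)"
    and cont: "\<And>\<theta>. \<theta> \<in> space M \<Longrightarrow> continuous_on UNIV (\<lambda>z. g z \<theta>)"
    and A: "0 \<le> A" and gb: "\<And>\<theta> z. \<theta> \<in> space M \<Longrightarrow> \<bar>g z \<theta>\<bar> \<le> A * w \<theta> * cauchy_weight z"
    and B: "0 \<le> B"
    and bd: "\<And>\<theta>. \<theta> \<in> space M \<Longrightarrow> \<forall>b\<in>Basis. \<forall>c\<in>Basis. \<forall>z.
               \<bar>dpart c (dpart b (\<lambda>z. g z \<theta>)) z\<bar> \<le> B * w \<theta> * cauchy_weight z"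
  shows "\<bar>(\<integral>\<theta>. (1/L) ^ DIM((real^'d)^'k) * infsum (\<lambda>z. g z \<theta>) (latt_k L - Dset p c0 c s) \<partial>M)
           - (\<integral>\<theta>. (\<integral>z. g z \<theta> \<partial>lborel) \<partial>M)\<bar>
    \<le> (B * 15 ^ DIM((real^'d)^'k) * (real DIM((real^'d)^'k))\<^sup>2 + real p * A * 6 ^ DIM((real^'d)^'k)) / L\<^sup>2
       * (\<integral>\<theta>. w \<theta> \<partial>M)"
proof -
  define n where "n = DIM((real^'d)^'k)"
  define K where "K = (B * 15 ^ n * (real n)\<^sup>2 + real p * A * 6 ^ n) / L\<^sup>2"
  define Z where "Z = latt_k L - Dset p c0 c s"
  define S where "S \<theta> = (1/L) ^ n * infsum (\<lambda>z. g z \<theta>) Z" for \<theta>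
  define J where "J \<theta> = (\<integral>z. g z \<theta> \<partial>lborel)" for \<theta>
  have Z: "Z \<subseteq> grid L" unfolding Z_def latt_k_eq_grid by auto
  have gb': "\<bar>g z \<theta>\<bar> \<le> (A * w \<theta>) * cauchy_weight z" if "\<theta> \<in> space M" for \<theta> z
    using gb[OF that] by simp
  have bd': "\<forall>b\<in>Basis. \<forall>c\<in>Basis. \<forall>z. \<bar>dpart c (dpart b (\<lambda>z. g z \<theta>)) z\<bar> \<le> (B * w \<theta>) * cauchy_weight z"
    if "\<theta> \<in> space M" for \<theta>
    using bd[OF that] by simp
  have "\<bar>S \<theta> - J \<theta>\<bar> \<le> K * w \<theta>" if \<theta>: "\<theta> \<in> space M" for \<theta>
    using grid_sum_off_Dset_approximates_integral[OF L d2 c_nz C2[OF \<theta>] cont[OF \<theta>] _ gb'[OF \<theta>] _ bd'[OF \<theta>]]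
      A B w_nonneg[OF \<theta>]
    unfolding S_def J_def K_def Z_def n_def by (simp add: algebra_simps add_divide_distrib)
  moreover have "S \<in> borel_measurable M"
  proof -
    have "(\<lambda>\<theta>. (\<theta>, z)) \<in> measurable M (M \<Otimes>\<^sub>M lborel)" for z by simp
    from measurable_compose[OF this meas] have "(\<lambda>\<theta>. g z \<theta>) \<in> borel_measurable M" for z by simp
    moreover have "countable Z" using countable_subset[OF Z countable_grid] L by simp
    moreover have "(\<lambda>z. g z \<theta>) summable_on Z" if "\<theta> \<in> space M" for \<theta>
      using grid_dominated_summable(1)[OF L _ gb'[OF that]] A w_nonneg[OF that]
      by (intro summable_on_subset_banach[OF _ Z]) simp
    ultimately show ?thesis unfolding S_def by (intro borel_measurable_times borel_measurable_const borel_measurable_infsum)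
  qed
  moreover have "integrable M J"
  proof (rule Bochner_Integration.integrable_bound)
    show "integrable M (\<lambda>\<theta>. A * (\<integral>z. cauchy_weight (z::(real^'d)^'k) \<partial>lborel) * w \<theta>)"
      using w by (rule integrable_mult_right)
    show "J \<in> borel_measurable M"
      unfolding J_def using lborel.borel_measurable_lebesgue_integral[of "\<lambda>\<theta> z. g z \<theta>"] meas by simp
    show "AE \<theta> in M. norm (J \<theta>) \<le> norm (A * (\<integral>z. cauchy_weight (z::(real^'d)^'k) \<partial>lborel) * w \<theta>)"
    proof (rule AE_I2)
      fix \<theta> assume \<theta>: "\<theta> \<in> space M"
      have "\<bar>J \<theta>\<bar> \<le> (\<integral>z. \<bar>g z \<theta>\<bar> \<partial>lborel)"
        unfolding J_def using integral_norm_bound[of lborel "\<lambda>z. g z \<theta>"] by simp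
      also have "\<dots> \<le> (\<integral>z. A * w \<theta> * cauchy_weight (z::(real^'d)^'k) \<partial>lborel)"
        using gb'[OF \<theta>] integrable_of_le_cauchy_weight[OF cont[OF \<theta>] gb'[OF \<theta>]]
        by (intro integral_mono integrable_mult_right integrable_cauchy_weight) auto
      also have "\<dots> \<le> norm (A * (\<integral>z. cauchy_weight (z::(real^'d)^'k) \<partial>lborel) * w \<theta>)"
        by (simp add: mult_ac)
      finally show "norm (J \<theta>) \<le> norm (A * (\<integral>z. cauchy_weight (z::(real^'d)^'k) \<partial>lborel) * w \<theta>)"
        by simp
    qed
  qed
  ultimately have "\<bar>(\<integral>\<theta>. S \<theta> \<partial>M) - (\<integral>\<theta>. J \<theta> \<partial>M)\<bar> \<le> K * (\<integral>\<theta>. w \<theta> \<partial>M)"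
    by (intro integral_diff_le_of_pointwise(2)[OF w]) auto
  then show ?thesis unfolding S_def J_def K_def Z_def n_def .
qed

lemma borel_measurable_fix_parameter:
  fixes f :: "'a \<Rightarrow> 'b \<Rightarrow> real \<Rightarrow> real"
  assumes meas: "(\<lambda>(z, \<theta>, \<nu>). f z \<theta> \<nu>) \<in> borel_measurable (N \<Otimes>\<^sub>M (M \<Otimes>\<^sub>M restrict_space lborel I))"
    and \<nu>: "\<nu> \<in> I"
  shows "(\<lambda>(\<theta>, z). f z \<theta> \<nu>) \<in> borel_measurable (M \<Otimes>\<^sub>M N)"
proof -
  have "(\<lambda>x. (snd x, fst x, \<nu>)) \<in> measurable (M \<Otimes>\<^sub>M N) (N \<Otimes>\<^sub>M (M \<Otimes>\<^sub>M restrict_space lborel I))"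
    using \<nu> by (intro measurable_Pair measurable_const measurable_fst measurable_snd)
      (auto simp: space_restrict_space)
  from measurable_compose[OF this meas] show ?thesis by (simp add: case_prod_beta')
qed

lemma integral_grid_sum_off_Dset_error_explicit:
  fixes s :: "real^'d" and g :: "(real^'d)^'k \<Rightarrow> (nat \<Rightarrow> real) \<Rightarrow> real \<Rightarrow> real"
    and C2 :: "(real^'d)^'k \<Rightarrow> real" and C3 :: "(nat \<Rightarrow> real) \<Rightarrow> real"
  assumes L: "L \<ge> 1" and d2: "CARD('d) \<ge> 2" and c_nz: "\<forall>j<p. \<exists>i. c j i \<noteq> 0"
    and \<nu>: "\<nu> \<in> {0<..1/2}" and a: "0 \<le> a"
    and meas: "(\<lambda>(z, \<theta>, \<nu>). g z \<theta> \<nu>) \<in> borel_measurable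
                 (lborel \<Otimes>\<^sub>M (lebesgue_Rm m \<Otimes>\<^sub>M restrict_space lborel {0<..1/2}))"
    and C2g: "\<forall>\<theta>\<in>Rm m. \<forall>\<nu>\<in>{0<..1/2}. C2_fun (\<lambda>z. g z \<theta> \<nu>)"
    and K2: "0 \<le> K2" "\<And>z. C2 z \<le> K2 * cauchy_weight z"
    and K3: "0 \<le> K3" "\<And>\<theta>. \<theta> \<in> Rm m \<Longrightarrow> 0 \<le> C3 \<theta>"
      "\<And>\<theta>. \<theta> \<in> Rm m \<Longrightarrow> C3 \<theta> \<le> K3 * cauchy_weight_Rm m \<theta>"
    and bd0: "\<forall>z. \<forall>\<theta>\<in>Rm m. \<forall>\<nu>\<in>{0<..1/2}. \<bar>g z \<theta> \<nu>\<bar> \<le> a * C2 z * C3 \<theta>"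
    and bd1: "\<forall>z. \<forall>\<theta>\<in>Rm m. \<forall>\<nu>\<in>{0<..1/2}. \<forall>b\<in>Basis.
                \<bar>dpart b (\<lambda>z. g z \<theta> \<nu>) z\<bar> \<le> \<nu> powr (-1) * a * C2 z * C3 \<theta>"
    and bd2: "\<forall>z. \<forall>\<theta>\<in>Rm m. \<forall>\<nu>\<in>{0<..1/2}. \<forall>b\<in>Basis. \<forall>b'\<in>Basis.
                \<bar>dpart b' (dpart b (\<lambda>z. g z \<theta> \<nu>)) z\<bar> \<le> \<nu> powr (-2) * a * C2 z * C3 \<theta>"
  shows "\<bar>(\<integral>\<theta>. L powr (- real (CARD('k) * CARD('d))) *
              infsum (\<lambda>z. g z \<theta> \<nu>) (latt_k L - Dset p c0 c s) \<partial>lebesgue_Rm m)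
       - (\<integral>\<theta>. (\<integral>z. g z \<theta> \<nu> \<partial>lborel) \<partial>lebesgue_Rm m)\<bar>
    \<le> (15 ^ DIM((real^'d)^'k) * (real DIM((real^'d)^'k))\<^sup>2 + real p * 6 ^ DIM((real^'d)^'k))
       * K2 * K3 * (\<integral>\<theta>. cauchy_weight_Rm m \<theta> \<partial>lebesgue_Rm m) * a * \<nu> powr (-2) * L powr (-2)"
proof -
  define n where "n = DIM((real^'d)^'k)"
  define I where "I = (\<integral>\<theta>. cauchy_weight_Rm m \<theta> \<partial>lebesgue_Rm m)"
  define A where "A = a * K2 * K3"
  define B where "B = \<nu> powr (-2) * a * K2 * K3"
  have weight: "a' * C2 z * C3 \<theta> \<le> (a' * K2 * K3) * cauchy_weight_Rm m \<theta> * cauchy_weight z"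
    if "0 \<le> a'" "\<theta> \<in> Rm m" for a' z \<theta>
  proof -
    have "0 \<le> K2 * cauchy_weight z" using K2(1) cauchy_weight_pos[of z] by simp
    then have "C2 z * C3 \<theta> \<le> (K2 * cauchy_weight z) * (K3 * cauchy_weight_Rm m \<theta>)"
      by (intro mult_mono K2(2) K3(2,3)[OF that(2)])
    from mult_left_mono[OF this that(1)] show ?thesis by (simp add: mult_ac)
  qed
  have "L powr real (CARD('k) * CARD('d)) = L ^ n"
    using L unfolding n_def by (subst powr_realpow) auto
  then have Lpow_n: "L powr (- real (CARD('k) * CARD('d))) = (1/L) ^ n"
    by (simp add: powr_minus power_one_over inverse_eq_divide)
  have C2_le: "C2 z \<le> K2" for z
    by (rule order_trans[OF K2(2) mult_left_le[OF cauchy_weight_le_1 K2(1)]])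
  have "\<bar>(\<integral>\<theta>. (1/L) ^ n * infsum (\<lambda>z. g z \<theta> \<nu>) (latt_k L - Dset p c0 c s) \<partial>lebesgue_Rm m)
         - (\<integral>\<theta>. (\<integral>z. g z \<theta> \<nu> \<partial>lborel) \<partial>lebesgue_Rm m)\<bar>
      \<le> (B * 15 ^ n * (real n)\<^sup>2 + real p * A * 6 ^ n) / L\<^sup>2 * I"
    unfolding n_def I_def
  proof (rule integral_grid_sum_off_Dset_error[OF L d2 c_nz
        borel_measurable_fix_parameter[OF meas \<nu>] integrable_cauchy_weight_Rm])
    fix \<theta> assume "\<theta> \<in> space (lebesgue_Rm m)"
    then have \<theta>: "\<theta> \<in> Rm m" by (simp add: space_PiM)
    show "C2_fun (\<lambda>z. g z \<theta> \<nu>)" using C2g \<theta> \<nu> by blast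
    show "continuous_on UNIV (\<lambda>z. g z \<theta> \<nu>)"
    proof (rule continuous_on_of_dpart_bound)
      show "\<forall>b\<in>Basis. \<forall>x. has_dpart b (\<lambda>z. g z \<theta> \<nu>) x" using C2g \<theta> \<nu> unfolding C2_fun_def by blast
      have "\<nu> powr (-1) * a * C2 z * C3 \<theta> \<le> \<nu> powr (-1) * a * K2 * C3 \<theta>" for z
        using C2_le a K3(2)[OF \<theta>] by (intro mult_right_mono mult_left_mono) auto
      then show "\<forall>b\<in>Basis. \<forall>z. \<bar>dpart b (\<lambda>z. g z \<theta> \<nu>) z\<bar> \<le> \<nu> powr (-1) * a * K2 * C3 \<theta>"
        using bd1 \<theta> \<nu> by (meson order_trans)
    qed
    show "\<bar>g z \<theta> \<nu>\<bar> \<le> A * cauchy_weight_Rm m \<theta> * cauchy_weight z" for z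
      unfolding A_def using order_trans[OF bd0[rule_format, OF \<theta> \<nu>] weight[OF a \<theta>]] .
    show "\<forall>b\<in>Basis. \<forall>c\<in>Basis. \<forall>z. \<bar>dpart c (dpart b (\<lambda>z. g z \<theta> \<nu>)) z\<bar>
        \<le> B * cauchy_weight_Rm m \<theta> * cauchy_weight z"
      unfolding B_def using order_trans[OF bd2[rule_format, OF \<theta> \<nu>] weight[OF _ \<theta>]] a by simp
  qed (use a K2(1) K3(1) \<nu> cauchy_weight_Rm_pos less_imp_le in \<open>auto simp: A_def B_def\<close>)
  also have "\<dots> \<le> (B * 15 ^ n * (real n)\<^sup>2 + real p * B * 6 ^ n) / L\<^sup>2 * I"
  proof -
    have "1 \<le> \<nu> powr (-2)"
      using \<nu> by (simp add: powr_minus_divide le_divide_eq power_le_one)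
    then have "A \<le> B"
      using mult_right_mono[of 1 "\<nu> powr (-2)" A] a K2(1) K3(1) unfolding A_def B_def by (simp add: mult_ac)
    moreover have "0 \<le> I" unfolding I_def by (simp add: cauchy_weight_Rm_pos less_imp_le)
    ultimately show ?thesis by (intro mult_right_mono divide_right_mono add_left_mono mult_left_mono) auto
  qed
  also have "\<dots> = (15 ^ n * (real n)\<^sup>2 + real p * 6 ^ n) * K2 * K3 * I * a * \<nu> powr (-2) * L powr (-2)"
  proof -
    have Lpow: "L powr (-2) = 1 / L\<^sup>2"
      using L by (simp add: powr_minus_divide powr_numeral del: powr_minus)
    show ?thesis unfolding Lpow using L by (simp add: B_def field_simps)
  qed
  finally show ?thesis unfolding Lpow_n n_def I_def .
qed

theorem theorem3p1:
  fixes G :: "real^'d \<Rightarrow> (real^'d)^'k \<Rightarrow> (nat \<Rightarrow> real) \<Rightarrow> real \<Rightarrow> real"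
    and m p :: nat
    and c0 :: "nat \<Rightarrow> real" and c :: "nat \<Rightarrow> 'k::finite \<Rightarrow> real"
    and C1 :: "real^'d \<Rightarrow> real" and C2 :: "(real^'d)^'k \<Rightarrow> real"
    and C3 :: "(nat \<Rightarrow> real) \<Rightarrow> real"
  assumes d2: "CARD('d) \<ge> 2"
    and c_nz: "\<forall>j<p. \<exists>i. c j i \<noteq> 0"
    and meas: "\<forall>s. (\<lambda>(z, \<theta>, \<nu>). G s z \<theta> \<nu>) \<in> borel_measurable
                 (lborel \<Otimes>\<^sub>M (lebesgue_Rm m \<Otimes>\<^sub>M restrict_space lborel {0<..1/2}))"
    and C2z: "\<forall>s. \<forall>\<theta>\<in>Rm m. \<forall>\<nu>\<in>{0<..1/2}. C2_fun (\<lambda>z. G s z \<theta> \<nu>)"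
    and dC1: "rapid_decay C1" and dC2: "rapid_decay C2" and dC3: "rapid_decay_Rm m C3"
    and bd0: "\<forall>s z. \<forall>\<theta>\<in>Rm m. \<forall>\<nu>\<in>{0<..1/2}. \<bar>G s z \<theta> \<nu>\<bar> \<le> C1 s * C2 z * C3 \<theta>"
    and bd1: "\<forall>s z. \<forall>\<theta>\<in>Rm m. \<forall>\<nu>\<in>{0<..1/2}. \<forall>b\<in>Basis.
                \<bar>dpart b (\<lambda>z. G s z \<theta> \<nu>) z\<bar> \<le> \<nu> powr (-1) * C1 s * C2 z * C3 \<theta>"
    and bd2: "\<forall>s z. \<forall>\<theta>\<in>Rm m. \<forall>\<nu>\<in>{0<..1/2}. \<forall>b\<in>Basis. \<forall>b'\<in>Basis.
                \<bar>dpart b' (dpart b (\<lambda>z. G s z \<theta> \<nu>)) z\<bar> \<le> \<nu> powr (-2) * C1 s * C2 z * C3 \<theta>"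
  shows "\<exists>C. rapid_decay C \<and>
    (\<forall>\<nu>\<in>{0<..1/2}. \<forall>L::real. L \<ge> 1 \<longrightarrow> (\<forall>s.
      \<bar>(\<integral>\<theta>. L powr (- real (CARD('k) * CARD('d))) *
              infsum (\<lambda>z. G s z \<theta> \<nu>) (latt_k L - Dset p c0 c s) \<partial>lebesgue_Rm m)
       - (\<integral>\<theta>. (\<integral>z. G s z \<theta> \<nu> \<partial>lborel) \<partial>lebesgue_Rm m)\<bar>
      \<le> C s * \<nu> powr (-2) * L powr (-2)))"
proof -
  define n where "n = DIM((real^'d)^'k)"
  obtain K2 where K2: "0 \<le> K2" "\<And>z. C2 z \<le> K2 * cauchy_weight z"
    using rapid_decay_le_cauchy_weight[OF dC2] by blast
  obtain K3 where K3: "0 \<le> K3" "\<And>\<theta>. \<theta> \<in> Rm m \<Longrightarrow> C3 \<theta> \<le> K3 * cauchy_weight_Rm m \<theta>"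
    using rapid_decay_Rm_le_cauchy_weight_Rm[OF dC3] by blast
  have C1: "\<And>s. 0 \<le> C1 s" using dC1 unfolding rapid_decay_def by blast
  have C3: "\<And>\<theta>. \<theta> \<in> Rm m \<Longrightarrow> 0 \<le> C3 \<theta>" using dC3 unfolding rapid_decay_Rm_def by blast
  define K where "K = (15 ^ n * (real n)\<^sup>2 + real p * 6 ^ n) * K2 * K3
    * (\<integral>\<theta>. cauchy_weight_Rm m \<theta> \<partial>lebesgue_Rm m)"
  have "0 \<le> K"
    unfolding K_def using K2 K3 by (simp add: integral_nonneg_AE cauchy_weight_Rm_pos less_imp_le)
  with dC1 have "rapid_decay (\<lambda>s. K * C1 s)" by (rule rapid_decay_cmult)
  moreover have "\<bar>(\<integral>\<theta>. L powr (- real (CARD('k) * CARD('d))) *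
              infsum (\<lambda>z. G s z \<theta> \<nu>) (latt_k L - Dset p c0 c s) \<partial>lebesgue_Rm m)
       - (\<integral>\<theta>. (\<integral>z. G s z \<theta> \<nu> \<partial>lborel) \<partial>lebesgue_Rm m)\<bar>
      \<le> K * C1 s * \<nu> powr (-2) * L powr (-2)" if "\<nu> \<in> {0<..1/2}" "1 \<le> L" for \<nu> L s
    unfolding K_def n_def
    by (rule integral_grid_sum_off_Dset_error_explicit[OF that(2) d2 c_nz that(1) C1
          spec[OF meas] spec[OF C2z] K2 K3(1) C3 K3(2) spec[OF bd0] spec[OF bd1] spec[OF bd2]])
  ultimately show ?thesis by blast
qed

end
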